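(* Let $X\in\{\pm1\}$ be a binary random variable with mean $\mu\in[-1,1]$, i.e. $\Pr(X=1)=(1+\mu)/2$. Let $Y$ be an observation of $X$ through a BMS channel with moment sequence $\{q_k\}_{k\in\mathbb{N}}$, and let $U$ be another observation on the same probability space such that $U - X - Y$ forms a Markov chain. Then $$H(X\mid Y)=\sum_{k=1}^\infty c_k(1-q_k)(1-\mu^{2k}),\qquad H(X\mid Y,U)=\sum_{k=1}^\infty c_k(1-q_k)\big(1-\|\mathbb{E}[X\mid U]\|_{2k}^{2k}\big).$$
   Context: A BMS channel has input $\{\pm1\}$, output in $\overline{\mathbb{R}}$ and transition density with $w(y\mid+1)=w(-y\mid-1)$. Its moment sequence is $q_k=\mathbb{E}\big[\mathbb{E}[X_{\mathrm u}\mid Y_{\mathrm u}]^{2k}\big]$, where $X_{\mathrm u}$ is uniform on $\{\pm1\}$ and $Y_{\mathrm u}$ is its output through the channel. $c_k=\frac{1}{(\ln2)\,2k(2k-1)}$. Entropies are in bits. $\|Z\|_p=(\mathbb{E}|Z|^p)^{1/p}$. *)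

theory Defs
  imports "HOL-Probability.Probability"
begin

text \<open>A BMS channel is given by its output law P (a probability measure on the Borel
  sets of the extended reals) for input +1; the output law for input x in {-1,1}
  is the law of x * y with y ~ P, so that the law for input -1 is the reflection of P.\<close>

definition bms :: "ereal measure \<Rightarrow> bool" where
  "bms P \<longleftrightarrow> prob_space P \<and> sets P = sets (borel :: ereal measure)"

definition bms_out :: "ereal measure \<Rightarrow> real \<Rightarrow> ereal measure" where
  "bms_out P x = distr P borel (\<lambda>y. ereal x * y)"

definition sigma_rv :: "'a measure \<Rightarrow> ('a \<Rightarrow> 'b) \<Rightarrow> 'b measure \<Rightarrow> 'a measure" where
  "sigma_rv M Z N = vimage_algebra (space M) Z N"

definition cond_entropy_bits ::
    "'a measure \<Rightarrow> 'b set \<Rightarrow> ('a \<Rightarrow> 'b) \<Rightarrow> 'a measure \<Rightarrow> real" where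
  "cond_entropy_bits M A X F =
     (\<integral>\<omega>. (\<Sum>x\<in>A. (let p = real_cond_exp M F (indicator {\<eta>\<in>space M. X \<eta> = x}) \<omega>
                     in - p * log 2 p)) \<partial>M)"

definition bms_uniform_joint :: "ereal measure \<Rightarrow> (real \<times> ereal) measure" where
  "bms_uniform_joint P =
     distr (uniform_count_measure {-1, 1::real} \<Otimes>\<^sub>M P) (borel \<Otimes>\<^sub>M borel)
           (\<lambda>(x, y). (x, ereal x * y))"

definition bms_moment :: "ereal measure \<Rightarrow> nat \<Rightarrow> real" where
  "bms_moment P k =
     (let J = bms_uniform_joint P in
       \<integral>\<omega>. (real_cond_exp J (sigma_rv J snd borel) fst \<omega>) ^ (2 * k) \<partial>J)"

definition ck :: "nat \<Rightarrow> real" where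
  "ck k = 1 / (ln 2 * (2 * real k) * (2 * real k - 1))"

end

theory Submission
  imports Defs
begin

text \<open>Write \<open>h(z)\<close> for the entropy of a \<open>\<plusminus>1\<close> variable of mean \<open>z\<close>. Given side information with
  prior mean \<open>m = \<bbbE>[X | U]\<close> and a channel output of soft value \<open>t = \<bbbE>[X\<^sub>u | Y\<^sub>u = y]\<close>, Bayes' rule
  gives the posterior \<open>(1 + x m)(1 + x t) / (2 (1 + m t))\<close>, and the pair (side information, output)
  has density \<open>1 + m t\<close> with respect to the product of the law of the side information and the
  output law \<open>S\<close> of the channel under uniform input. Hence \<open>H(X | Y, U)\<close> is the mean over \<open>m\<close> of
  the \<open>S\<close>-integral of \<open>1 + m t\<close> times the entropy of the posterior. The law of \<open>t\<close> under \<open>S\<close> is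
  symmetric, and averaging this integrand over \<open>t \<mapsto> -t\<close> gives \<open>h(m) + h(t) - h(m t)\<close>; expanding
  \<open>1 - h(z) = \<Sum>\<^sub>k c\<^sub>k z\<^sup>2\<^sup>k\<close> and integrating term by term yields \<open>\<Sum>\<^sub>k c\<^sub>k (1 - q\<^sub>k)(1 - \<bbbE> m\<^sup>2\<^sup>k)\<close>.
  Without side information \<open>m = \<mu>\<close>.\<close>

definition entropy_term :: "real \<Rightarrow> real" where
  "entropy_term p = - p * log 2 p"

definition binary_entropy :: "real \<Rightarrow> real" where
  "binary_entropy z = entropy_term ((1 + z) / 2) + entropy_term ((1 - z) / 2)"

lemma ck_Suc: "ck (Suc k) = 1 / (ln 2 * (2 * real k + 1) * (2 * real k + 2))"
  unfolding ck_def by (simp add: algebra_simps)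

lemma ck_Suc_nonneg: "0 \<le> ck (Suc k)"
  unfolding ck_Suc by simp

lemma sums_ck_Suc: "(\<lambda>k. ck (Suc k)) sums 1"
proof -
  have "(\<lambda>k. (inverse (real (2*k+1)) - inverse (real (2*k+2))) / ln 2) sums (ln 2 / ln 2)"
    by (rule sums_divide[OF alternating_harmonic_series_sums'])
  moreover have "(inverse (real (2*k+1)) - inverse (real (2*k+2))) / ln 2 = ck (Suc k)" for k
    unfolding ck_Suc by (simp add: field_simps)
  ultimately show ?thesis by simp
qed

lemma one_minus_binary_entropy_ln:
  fixes z :: real assumes z: "\<bar>z\<bar> < 1"
  shows "1 - binary_entropy z = (ln (1 - z\<^sup>2) + z * ln ((1 + z) / (1 - z))) / (2 * ln 2)"
proof -
  have pos: "1 + z > 0" "1 - z > 0" using z by (auto simp: abs_less_iff)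
  have "1 - z\<^sup>2 = (1 + z) * (1 - z)" by (simp add: algebra_simps power2_eq_square)
  then have "ln (1 - z\<^sup>2) = ln (1 + z) + ln (1 - z)" using pos by (simp add: ln_mult)
  then show ?thesis
    using pos by (simp add: binary_entropy_def entropy_term_def log_def ln_div field_simps)
qed

lemma sums_ck_Suc_power_ln:
  fixes z :: real assumes z: "\<bar>z\<bar> < 1"
  shows "(\<lambda>k. ck (Suc k) * z ^ (2 * Suc k))
           sums ((ln (1 - z\<^sup>2) + z * ln ((1 + z) / (1 - z))) / (2 * ln 2))"
proof -
  have "(\<lambda>n. - ((-(-(z\<^sup>2))) ^ n) / of_nat n) sums ln (1 + -(z\<^sup>2))"
    by (rule ln_series') (use z in \<open>simp add: abs_square_less_1\<close>)
  then have "(\<lambda>n. - ((z\<^sup>2) ^ Suc n) / real (Suc n)) sums ln (1 - z\<^sup>2)"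
    by (subst sums_Suc_iff) simp
  moreover have "(\<lambda>n. 2 * z ^ (2 * n + 1) / real (2 * n + 1)) sums ln ((1 + z) / (1 - z))"
  proof -
    have "((1 + z) / (1 - z) - 1) / ((1 + z) / (1 - z) + 1) = z"
      using z by (auto simp: abs_less_iff field_simps)
    then show ?thesis
      using ln_series_quadratic[of "(1 + z) / (1 - z)"] z by (auto simp: abs_less_iff)
  qed
  ultimately have "(\<lambda>n. (- ((z\<^sup>2) ^ Suc n) / real (Suc n) + z * (2 * z ^ (2 * n + 1) / real (2 * n + 1)))
      / (2 * ln 2)) sums ((ln (1 - z\<^sup>2) + z * ln ((1 + z) / (1 - z))) / (2 * ln 2))"
    by (intro sums_divide sums_add sums_mult)
  moreover have "(- ((z\<^sup>2) ^ Suc n) / real (Suc n) + z * (2 * z ^ (2 * n + 1) / real (2 * n + 1)))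
      / (2 * ln 2) = ck (Suc n) * z ^ (2 * Suc n)" for n
  proof -
    define w where "w = z ^ (2 * Suc n)"
    have powers: "(z\<^sup>2) ^ Suc n = w" "z * (2 * z ^ (2 * n + 1) / real (2 * n + 1)) = 2 * w / real (2 * n + 1)"
      by (simp_all add: w_def power_mult[symmetric] power_add[symmetric])
    show ?thesis
      unfolding powers ck_Suc w_def[symmetric] by (simp add: field_simps)
  qed
  ultimately show ?thesis by simp
qed

lemma sums_one_minus_binary_entropy:
  fixes z :: real assumes z: "\<bar>z\<bar> \<le> 1"
  shows "(\<lambda>k. ck (Suc k) * z ^ (2 * Suc k)) sums (1 - binary_entropy z)"
proof (cases "\<bar>z\<bar> < 1")
  case True
  then show ?thesis using sums_ck_Suc_power_ln one_minus_binary_entropy_ln by simp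
next
  case False
  then have "z = 1 \<or> z = -1" using z by auto
  then have "z ^ (2 * Suc k) = 1" for k by (auto simp: power_mult)
  moreover have "binary_entropy z = 0"
    using \<open>z = 1 \<or> z = -1\<close> by (auto simp: binary_entropy_def entropy_term_def)
  ultimately show ?thesis using sums_ck_Suc by simp
qed

lemma sums_binary_entropy_defect:
  fixes m t :: real assumes m: "\<bar>m\<bar> \<le> 1" and t: "\<bar>t\<bar> \<le> 1"
  shows "(\<lambda>k. ck (Suc k) * (1 - m ^ (2 * Suc k)) * (1 - t ^ (2 * Suc k)))
           sums (binary_entropy m + binary_entropy t - binary_entropy (m * t))"
proof -
  have "\<bar>m * t\<bar> \<le> 1" using m t by (simp add: abs_mult mult_le_one)
  then have "(\<lambda>k. ck (Suc k) - ck (Suc k) * m ^ (2 * Suc k) - ck (Suc k) * t ^ (2 * Suc k)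
        + ck (Suc k) * (m * t) ^ (2 * Suc k))
      sums (1 - (1 - binary_entropy m) - (1 - binary_entropy t) + (1 - binary_entropy (m * t)))"
    by (intro sums_add sums_diff sums_ck_Suc sums_one_minus_binary_entropy m t)
  then show ?thesis
    by (simp add: algebra_simps power_mult_distrib)
qed

lemma even_power_bounds:
  fixes a :: real assumes "\<bar>a\<bar> \<le> 1"
  shows "0 \<le> a ^ (2 * n)" "a ^ (2 * n) \<le> 1"
proof -
  show "0 \<le> a ^ (2 * n)" by (simp add: power_mult)
  have "\<bar>a\<bar> ^ (2 * n) \<le> 1" using assms by (simp add: power_le_one)
  then show "a ^ (2 * n) \<le> 1" by (simp add: power_even_abs)
qed

lemma abs_ck_Suc_mult_le:
  fixes u v :: real assumes "0 \<le> u" "u \<le> 1" "0 \<le> v" "v \<le> 1"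
  shows "\<bar>ck (Suc k) * u * v\<bar> \<le> ck (Suc k)"
  using assms ck_Suc_nonneg[of k] mult_mono[of u 1 v 1]
  by (simp add: abs_mult mult_left_le mult.assoc)

lemma entropy_term_mult:
  fixes x y :: real assumes "0 \<le> x" "0 \<le> y"
  shows "entropy_term (x * y) = x * entropy_term y + y * entropy_term x"
  using assms by (cases "x = 0 \<or> y = 0") (auto simp: entropy_term_def log_mult algebra_simps)

lemma entropy_term_divide:
  fixes p s :: real assumes "0 \<le> p" "0 \<le> s" "s = 0 \<Longrightarrow> p = 0"
  shows "s * entropy_term (p / s) = entropy_term p + p * log 2 s"
  using assms by (cases "p = 0") (auto simp: entropy_term_def log_divide algebra_simps)

lemma entropy_term_bounds:
  fixes p :: real assumes "0 \<le> p" "p \<le> 1"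
  shows "0 \<le> entropy_term p" "entropy_term p \<le> 1 / ln 2"
proof -
  have "0 \<le> - p * ln p \<and> - p * ln p \<le> 1"
  proof (cases "p = 0")
    case False
    then have p: "0 < p" using assms by simp
    have "- ln p \<le> 1 / p - 1" using ln_le_minus_one[of "1 / p"] p by (simp add: ln_div)
    then have "p * - ln p \<le> p * (1 / p - 1)" using p by (intro mult_left_mono) auto
    also have "\<dots> \<le> 1" using p by (simp add: field_simps)
    finally show ?thesis using p assms by (simp add: mult_nonneg_nonpos)
  qed simp
  then have "0 \<le> - p * ln p / ln 2" "- p * ln p / ln 2 \<le> 1 / ln 2"
    using divide_nonneg_pos[of "- p * ln p" "ln 2"] divide_right_mono[of "- p * ln p" 1 "ln 2"] by auto
  then show "0 \<le> entropy_term p" "entropy_term p \<le> 1 / ln 2"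
    by (simp_all add: entropy_term_def log_def)
qed

text \<open>Bayes' rule for a \<open>\<plusminus>1\<close> input of prior mean \<open>m\<close> observed at a channel output of soft value
  \<open>t = \<bbbE>[X\<^sub>u | Y\<^sub>u = y]\<close>, whose likelihood ratio is \<open>(1 + t) / (1 - t)\<close>.\<close>

definition posterior :: "real \<Rightarrow> real \<Rightarrow> real \<Rightarrow> real" where
  "posterior x m t = (1 + x * m) * (1 + x * t) / (2 * (1 + m * t))"

definition posterior_entropy :: "real \<Rightarrow> real \<Rightarrow> real" where
  "posterior_entropy m t = entropy_term (posterior 1 m t) + entropy_term (posterior (-1) m t)"

lemma posterior_mult_normaliser:
  fixes m t x :: real assumes m: "\<bar>m\<bar> \<le> 1" and t: "\<bar>t\<bar> \<le> 1" and x: "x \<in> {-1, 1}"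
  shows "posterior x m t * (1 + m * t) = (1 + x * m) * (1 + x * t) / 2"
proof (cases "1 + m * t = 0")
  case True
  have "(m + t)\<^sup>2 = m\<^sup>2 + t\<^sup>2 + 2 * (m * t)" by (simp add: power2_eq_square algebra_simps)
  also have "\<dots> \<le> 0"
    using True m t by (simp add: abs_le_square_iff[of _ 1, simplified])
  finally have "t = - m" by simp
  with True have "m\<^sup>2 = 1" by (simp add: power2_eq_square)
  then show ?thesis using True x \<open>t = - m\<close> by (auto simp: posterior_def algebra_simps power2_eq_square)
qed (simp add: posterior_def field_simps)

lemma posterior_bounds:
  fixes m t x :: real assumes m: "\<bar>m\<bar> \<le> 1" and t: "\<bar>t\<bar> \<le> 1" and x: "x \<in> {-1, 1}"
  shows "0 \<le> posterior x m t" "posterior x m t \<le> 1"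
proof -
  have factors: "0 \<le> 1 + x * m" "0 \<le> 1 - x * m" "0 \<le> 1 + x * t" "0 \<le> 1 - x * t"
    using m t x by (auto simp: abs_le_iff)
  have "\<bar>m * t\<bar> \<le> 1" using m t by (simp add: abs_mult mult_le_one)
  then have denom: "0 \<le> 1 + m * t" by (simp add: abs_le_iff)
  then show "0 \<le> posterior x m t" using factors by (simp add: posterior_def)
  have "0 \<le> (1 - x * m) * (1 - x * t)" using factors by simp
  then have "(1 + x * m) * (1 + x * t) \<le> 2 * (1 + m * t)" using x by (auto simp: algebra_simps)
  then show "posterior x m t \<le> 1"
    using denom by (cases "1 + m * t = 0") (simp_all add: posterior_def divide_le_eq_1)
qed

lemma posterior_entropy_bounds:
  fixes m t :: real assumes "\<bar>m\<bar> \<le> 1" "\<bar>t\<bar> \<le> 1"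
  shows "0 \<le> posterior_entropy m t" "posterior_entropy m t \<le> 2 / ln 2"
  using entropy_term_bounds[OF posterior_bounds[OF assms, of 1]]
    entropy_term_bounds[OF posterior_bounds[OF assms, of "-1"]]
  by (simp_all add: posterior_entropy_def)

lemma abs_weighted_posterior_entropy_le:
  fixes m t :: real assumes m: "\<bar>m\<bar> \<le> 1" and t: "\<bar>t\<bar> \<le> 1"
  shows "\<bar>(1 + m * t) * posterior_entropy m t\<bar> \<le> 4 / ln 2"
proof -
  have "\<bar>m * t\<bar> \<le> 1" using m t by (simp add: abs_mult mult_le_one)
  then have "0 \<le> 1 + m * t" "1 + m * t \<le> 2" by (auto simp: abs_le_iff)
  then show ?thesis
    using posterior_entropy_bounds[OF m t] mult_mono[of "1 + m * t" 2 "posterior_entropy m t" "2 / ln 2"]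
    by (simp add: abs_mult)
qed

text \<open>With \<open>a = (1 + m) / 2\<close>, \<open>b = (1 + t) / 2\<close>, the posterior is \<open>a b / s\<close> resp. \<open>(1 - a)(1 - b) / s\<close> with
  normaliser \<open>s = a b + (1 - a)(1 - b)\<close>.\<close>

lemma weighted_posterior_entropy_eq:
  fixes m t :: real assumes m: "\<bar>m\<bar> \<le> 1" and t: "\<bar>t\<bar> \<le> 1"
  defines "a \<equiv> (1 + m) / 2" and "b \<equiv> (1 + t) / 2"
  shows "(1 + m * t) * posterior_entropy m t
    = 2 * (entropy_term (a * b) + entropy_term ((1 - a) * (1 - b)) - entropy_term ((1 + m * t) / 2))"
proof -
  define s where "s = (1 + m * t) / 2"
  have a: "0 \<le> a" "a \<le> 1" and b: "0 \<le> b" "b \<le> 1"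
    using m t by (auto simp: a_def b_def abs_le_iff)
  have s: "s = a * b + (1 - a) * (1 - b)" by (simp add: s_def a_def b_def field_simps)
  have nonneg: "0 \<le> a * b" "0 \<le> (1 - a) * (1 - b)" using a b by auto
  then have "0 \<le> s" "s = 0 \<Longrightarrow> a * b = 0" "s = 0 \<Longrightarrow> (1 - a) * (1 - b) = 0"
    using s by linarith+
  note divide = entropy_term_divide[OF nonneg(1) this(1,2)] entropy_term_divide[OF nonneg(2) this(1,3)]
  have "posterior 1 m t = a * b / s" "posterior (-1) m t = (1 - a) * (1 - b) / s"
    by (cases "1 + m * t = 0"; simp add: posterior_def a_def b_def s_def field_simps)+
  moreover have "1 + m * t = 2 * s" by (simp add: s_def)
  ultimately have "(1 + m * t) * posterior_entropy m t
      = 2 * (s * entropy_term (a * b / s) + s * entropy_term ((1 - a) * (1 - b) / s))"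
    unfolding posterior_entropy_def by (simp add: algebra_simps)
  also have "\<dots> = 2 * (entropy_term (a * b) + a * b * log 2 s
      + (entropy_term ((1 - a) * (1 - b)) + (1 - a) * (1 - b) * log 2 s))"
    using divide by simp
  also have "\<dots> = 2 * (entropy_term (a * b) + entropy_term ((1 - a) * (1 - b)) - entropy_term s)"
    unfolding entropy_term_def s by (simp add: algebra_simps)
  finally show ?thesis by (simp add: s_def)
qed

lemma weighted_posterior_entropy_symmetrised:
  fixes m t :: real assumes m: "\<bar>m\<bar> \<le> 1" and t: "\<bar>t\<bar> \<le> 1"
  shows "(1 + m * t) * posterior_entropy m t + (1 + m * - t) * posterior_entropy m (- t)
    = 2 * (binary_entropy m + binary_entropy t - binary_entropy (m * t))"
proof -
  define a b where "a = (1 + m) / 2" and "b = (1 + t) / 2"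
  have a: "0 \<le> a" "0 \<le> 1 - a" and b: "0 \<le> b" "0 \<le> 1 - b"
    using m t by (auto simp: a_def b_def abs_le_iff)
  have "\<bar>- t\<bar> \<le> 1" using t by simp
  have flip: "(1 + - t) / 2 = 1 - b" "1 - (1 - b) = b" "(1 + m * - t) / 2 = 1 - (1 + m * t) / 2"
    by (simp_all add: b_def field_simps)
  note weighted = weighted_posterior_entropy_eq[OF m t, folded a_def b_def]
    weighted_posterior_entropy_eq[OF m \<open>\<bar>- t\<bar> \<le> 1\<close>, unfolded flip(1), unfolded flip(2,3), folded a_def]
  have "binary_entropy m = entropy_term a + entropy_term (1 - a)"
    "binary_entropy t = entropy_term b + entropy_term (1 - b)"
    "binary_entropy (m * t) = entropy_term ((1 + m * t) / 2) + entropy_term (1 - (1 + m * t) / 2)"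
    by (simp_all add: binary_entropy_def a_def b_def field_simps)
  then show ?thesis
    unfolding weighted entropy_term_mult[OF a(1) b(1)] entropy_term_mult[OF a(2) b(2)]
      entropy_term_mult[OF a(1) b(2)] entropy_term_mult[OF a(2) b(1)]
    by (simp add: algebra_simps)
qed

lemma borel_measurable_binary_entropy[measurable]:
  assumes [measurable]: "f \<in> borel_measurable M"
  shows "(\<lambda>x. binary_entropy (f x)) \<in> borel_measurable M"
  unfolding binary_entropy_def entropy_term_def by measurable

lemma borel_measurable_posterior[measurable]:
  assumes [measurable]: "f \<in> borel_measurable M" "g \<in> borel_measurable M"
  shows "(\<lambda>x. posterior c (f x) (g x)) \<in> borel_measurable M"
  unfolding posterior_def by measurable

lemma borel_measurable_posterior_entropy[measurable]:
  assumes [measurable]: "f \<in> borel_measurable M" "g \<in> borel_measurable M"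
  shows "(\<lambda>x. posterior_entropy (f x) (g x)) \<in> borel_measurable M"
  unfolding posterior_entropy_def entropy_term_def by measurable

lemma abs_mult_le_bound:
  fixes a c :: real assumes "\<bar>a\<bar> \<le> B" "\<bar>c\<bar> \<le> 1"
  shows "\<bar>a * c\<bar> \<le> B"
  using mult_mono[of "\<bar>a\<bar>" B "\<bar>c\<bar>" 1] assms by (simp add: abs_mult)

lemma (in finite_measure) integrable_bounded:
  fixes f :: "'a \<Rightarrow> real"
  assumes "f \<in> borel_measurable M" "\<And>x. x \<in> space M \<Longrightarrow> \<bar>f x\<bar> \<le> B"
  shows "integrable M f"
  using assms by (intro integrable_const_bound[where B=B] AE_I2) auto

lemma (in prob_space) abs_integral_le_bound:
  fixes f :: "'a \<Rightarrow> real"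
  assumes "f \<in> borel_measurable M" "\<And>x. x \<in> space M \<Longrightarrow> \<bar>f x\<bar> \<le> B"
  shows "\<bar>\<integral>x. f x \<partial>M\<bar> \<le> B"
proof -
  have "\<bar>\<integral>x. f x \<partial>M\<bar> \<le> (\<integral>x. \<bar>f x\<bar> \<partial>M)"
    using integral_norm_bound[of M f] by simp
  also have "\<dots> \<le> B"
    using assms by (intro integral_le_const integrable_bounded[of _ B] AE_I2) auto
  finally show ?thesis .
qed

lemma (in prob_space) sums_integral_dominated:
  fixes f :: "nat \<Rightarrow> 'a \<Rightarrow> real" and b :: "nat \<Rightarrow> real"
  assumes b: "summable b"
    and f[measurable]: "\<And>k. f k \<in> borel_measurable M"
    and dominated: "\<And>k x. x \<in> space M \<Longrightarrow> \<bar>f k x\<bar> \<le> b k"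
    and sums: "\<And>x. x \<in> space M \<Longrightarrow> (\<lambda>k. f k x) sums g x"
    and g[measurable]: "g \<in> borel_measurable M"
  shows "(\<lambda>k. \<integral>x. f k x \<partial>M) sums (\<integral>x. g x \<partial>M)"
proof -
  have "(\<lambda>k. \<integral>x. f k x \<partial>M) sums (\<integral>x. (\<Sum>k. f k x) \<partial>M)"
  proof (rule sums_integral)
    show "integrable M (f k)" for k
      using dominated by (rule integrable_bounded[OF f])
    show "AE x in M. summable (\<lambda>k. norm (f k x))"
      using dominated by (intro AE_I2 summable_comparison_test'[OF b, of 0]) auto
    show "summable (\<lambda>k. \<integral>x. norm (f k x) \<partial>M)"
    proof (rule summable_comparison_test'[OF b, of 0])
      show "norm (\<integral>x. norm (f k x) \<partial>M) \<le> b k" for k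
        using abs_integral_le_bound[of "\<lambda>x. norm (f k x)" "b k"] dominated by simp
    qed
  qed
  also have "(\<integral>x. (\<Sum>k. f k x) \<partial>M) = (\<integral>x. g x \<partial>M)"
    using sums_unique[OF sums] by (intro Bochner_Integration.integral_cong) auto
  finally show ?thesis .
qed

lemma sets_sigma_rv:
  "Z \<in> measurable M N \<Longrightarrow> sets (sigma_rv M Z N) = {Z -` A \<inter> space M | A. A \<in> sets N}"
  unfolding sigma_rv_def by (intro sets_vimage_algebra2) (auto dest: measurable_space)

lemma subalgebra_sigma_rv:
  assumes Z: "Z \<in> measurable M N" shows "subalgebra M (sigma_rv M Z N)"
proof -
  have "sets (sigma_rv M Z N) \<subseteq> sets M"
    using measurable_sets[OF Z] by (auto simp: sets_sigma_rv[OF Z])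
  then show ?thesis by (simp add: subalgebra_def sigma_rv_def)
qed

lemma borel_measurable_sigma_rv_factor:
  fixes f :: "'a \<Rightarrow> real"
  assumes f: "f \<in> borel_measurable (sigma_rv M Z N)" and Z: "Z \<in> measurable M N"
    and x: "x \<in> space M" "x' \<in> space M" "Z x = Z x'"
  shows "f x = f x'"
proof -
  have "f -` {f x} \<inter> space M \<in> sets (sigma_rv M Z N)"
    using measurable_sets[OF f, of "{f x}"] by (simp add: sigma_rv_def)
  then obtain A where A: "f -` {f x} \<inter> space M = Z -` A \<inter> space M"
    by (auto simp: sets_sigma_rv[OF Z])
  have "x \<in> f -` {f x} \<inter> space M" using x by simp
  then have "x' \<in> Z -` A \<inter> space M" using x unfolding A by simp
  then show ?thesis unfolding A[symmetric] by simp
qed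

lemma sets_sigma_rv_pair:
  assumes Y: "Y \<in> measurable M K" and U: "U \<in> measurable M N"
  shows "sets (sigma_rv M (\<lambda>\<omega>. (Y \<omega>, U \<omega>)) (K \<Otimes>\<^sub>M N))
    = sigma_sets (space M) {Y -` A \<inter> B | A B. A \<in> sets K \<and> B \<in> sets (sigma_rv M U N)}"
proof -
  let ?YU = "\<lambda>\<omega>. (Y \<omega>, U \<omega>)" and ?R = "{a \<times> b | a b. a \<in> sets K \<and> b \<in> sets N}"
  have YU: "?YU \<in> space M \<rightarrow> space K \<times> space N"
    using Y U by (auto dest: measurable_space)
  have "{?YU -` C \<inter> space M | C. C \<in> ?R} = {Y -` A \<inter> B | A B. A \<in> sets K \<and> B \<in> sets (sigma_rv M U N)}"
  proof (intro equalityI subsetI)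
    fix E assume "E \<in> {?YU -` C \<inter> space M | C. C \<in> ?R}"
    then obtain a b where "E = Y -` a \<inter> (U -` b \<inter> space M)" "a \<in> sets K" "b \<in> sets N" by auto
    then show "E \<in> {Y -` A \<inter> B | A B. A \<in> sets K \<and> B \<in> sets (sigma_rv M U N)}"
      unfolding sets_sigma_rv[OF U] by blast
  next
    fix E assume "E \<in> {Y -` A \<inter> B | A B. A \<in> sets K \<and> B \<in> sets (sigma_rv M U N)}"
    then obtain a b where "E = ?YU -` (a \<times> b) \<inter> space M" "a \<in> sets K" "b \<in> sets N"
      unfolding sets_sigma_rv[OF U] by auto
    then show "E \<in> {?YU -` C \<inter> space M | C. C \<in> ?R}" by blast
  qed
  moreover have "sets (sigma_rv M ?YU (K \<Otimes>\<^sub>M N)) = {?YU -` C \<inter> space M | C. C \<in> sigma_sets (space K \<times> space N) ?R}"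
    using YU unfolding sigma_rv_def by (simp add: sets_vimage_algebra2 space_pair_measure sets_pair_measure)
  ultimately show ?thesis by (simp add: sigma_sets_vimage_commute[OF YU])
qed

lemma sigma_rv_pair_const:
  assumes Y: "Y \<in> measurable M K" and c: "c \<in> space N"
  shows "sigma_rv M (\<lambda>\<omega>. (Y \<omega>, c)) (K \<Otimes>\<^sub>M N) = sigma_rv M Y K"
proof (rule measure_eqI)
  have "{(\<lambda>\<omega>. (Y \<omega>, c)) -` C \<inter> space M | C. C \<in> sets (K \<Otimes>\<^sub>M N)} = {Y -` A \<inter> space M | A. A \<in> sets K}"
  proof (intro equalityI subsetI)
    fix E assume "E \<in> {(\<lambda>\<omega>. (Y \<omega>, c)) -` C \<inter> space M | C. C \<in> sets (K \<Otimes>\<^sub>M N)}"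
    then obtain C where "E = Y -` ((\<lambda>y. (y, c)) -` C) \<inter> space M" and C: "C \<in> sets (K \<Otimes>\<^sub>M N)"
      by auto
    then show "E \<in> {Y -` A \<inter> space M | A. A \<in> sets K}"
      using sets_Pair2[OF C] by (intro CollectI exI[of _ "(\<lambda>y. (y, c)) -` C"]) simp
  next
    fix E assume "E \<in> {Y -` A \<inter> space M | A. A \<in> sets K}"
    then obtain A where "E = (\<lambda>\<omega>. (Y \<omega>, c)) -` (A \<times> space N) \<inter> space M" "A \<in> sets K"
      using c by auto
    then show "E \<in> {(\<lambda>\<omega>. (Y \<omega>, c)) -` C \<inter> space M | C. C \<in> sets (K \<Otimes>\<^sub>M N)}"
      by (intro CollectI exI[of _ "A \<times> space N"]) simp
  qed
  then show "sets (sigma_rv M (\<lambda>\<omega>. (Y \<omega>, c)) (K \<Otimes>\<^sub>M N)) = sets (sigma_rv M Y K)"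
    using Y c unfolding sigma_rv_def
    by (subst (1 2) sets_vimage_algebra2) (auto simp: space_pair_measure dest: measurable_space)
qed (simp add: sigma_rv_def vimage_algebra_def emeasure_sigma)

lemma (in prob_space) real_cond_exp_sigma_rv_const:
  assumes f: "integrable M f" and c: "c \<in> space N"
  shows "AE x in M. real_cond_exp M (sigma_rv M (\<lambda>_. c) N) f x = expectation f"
proof -
  interpret F: finite_measure_subalgebra M "sigma_rv M (\<lambda>_. c) N"
    using c by unfold_locales (simp add: subalgebra_sigma_rv)
  have trivial: "A \<in> sets (sigma_rv M (\<lambda>_. c) N) \<Longrightarrow> A = {} \<or> A = space M" for A
    using c by (auto simp: sets_sigma_rv split: if_splits)
  show ?thesis
  proof (rule F.real_cond_exp_charact)
    fix A assume "A \<in> sets (sigma_rv M (\<lambda>_. c) N)"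
    then consider "A = {}" | "A = space M" using trivial by blast
    then show "(\<integral>x\<in>A. f x \<partial>M) = (\<integral>x\<in>A. expectation f \<partial>M)"
      by cases (simp add: set_lebesgue_integral_def, simp add: set_integral_space f prob_space)
  qed (use f in simp_all)
qed

lemma (in finite_measure_subalgebra) emeasure_distr_density_subalg:
  fixes h :: "'a \<Rightarrow> real"
  assumes h: "integrable M h" "\<And>x. x \<in> space M \<Longrightarrow> 0 \<le> h x" and A: "A \<in> sets F"
  shows "emeasure (distr (density M h) F (\<lambda>x. x)) A = ennreal (\<integral>x\<in>A. h x \<partial>M)"
proof -
  have A_M: "A \<in> sets M" using A subalg by (auto simp: subalgebra_def)
  have "(\<lambda>x. x) \<in> measurable (density M h) F"
    using subalg by (auto simp: subalgebra_def measurable_def)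
  moreover have "(\<lambda>x. x) -` A \<inter> space (density M h) = A"
    using A_M sets.sets_into_space by auto
  ultimately have "emeasure (distr (density M h) F (\<lambda>x. x)) A = emeasure (density M h) A"
    using emeasure_distr A by metis
  also have "\<dots> = (\<integral>\<^sup>+x. ennreal (h x * indicator A x) \<partial>M)"
    using A_M h by (simp add: emeasure_density) (intro nn_integral_cong, simp add: indicator_def)
  also have "\<dots> = ennreal (\<integral>x\<in>A. h x \<partial>M)"
    using A_M h unfolding set_lebesgue_integral_def
    by (subst nn_integral_eq_integral) (auto intro!: integrable_real_mult_indicator simp: mult.commute)
  finally show ?thesis .
qed

lemma (in finite_measure_subalgebra) real_cond_exp_charact_generator:
  fixes f g :: "'a \<Rightarrow> real"
  assumes gen: "sets F = sigma_sets (space M) E" "Int_stable E" "space M \<in> E"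
    and eq: "\<And>A. A \<in> E \<Longrightarrow> (\<integral>x\<in>A. f x \<partial>M) = (\<integral>x\<in>A. g x \<partial>M)"
    and f: "integrable M f" "\<And>x. x \<in> space M \<Longrightarrow> 0 \<le> f x"
    and g: "integrable M g" "\<And>x. x \<in> space M \<Longrightarrow> 0 \<le> g x" "g \<in> borel_measurable F"
  shows "AE x in M. real_cond_exp M F f x = g x"
proof -
  have E_M: "E \<subseteq> sets M" using gen(1) subalg by (auto simp: subalgebra_def)
  have "distr (density M f) F (\<lambda>x. x) = distr (density M g) F (\<lambda>x. x)"
  proof (rule measure_eqI_generator_eq[OF gen(2), where A="\<lambda>_. space M"])
    show "E \<subseteq> Pow (space M)" using E_M sets.sets_into_space by blast
  qed (use gen eq emeasure_distr_density_subalg f g in auto)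
  moreover have nonneg: "0 \<le> (\<integral>x\<in>A. h x \<partial>M)" if "\<And>x. x \<in> space M \<Longrightarrow> 0 \<le> h x" for h :: "'a \<Rightarrow> real" and A
  proof -
    have "AE x in M. 0 \<le> indicator A x *\<^sub>R h x" using that by (auto simp: indicator_def)
    then show ?thesis unfolding set_lebesgue_integral_def by (rule integral_nonneg_AE)
  qed
  ultimately have "A \<in> sets F \<Longrightarrow> (\<integral>x\<in>A. f x \<partial>M) = (\<integral>x\<in>A. g x \<partial>M)" for A
    using emeasure_distr_density_subalg[OF f, of A] emeasure_distr_density_subalg[OF g(1,2), of A]
      nonneg[OF f(2)] nonneg[OF g(2)] by auto
  then show ?thesis
    using f g by (intro real_cond_exp_charact) auto
qed

text \<open>A \<open>\<plusminus>1\<close> variable \<open>X\<close> with side information \<open>G\<close> and prior mean \<open>m = \<bbbE>[X | G]\<close> (characterised by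
  \<open>integral_mult_X\<close>), observed through a BMS channel: \<open>S\<close> is the output law for uniform input and
  \<open>\<tau> y = \<bbbE>[X\<^sub>u | Y\<^sub>u = y]\<close>; given \<open>X = x\<close>, the output \<open>Y\<close> is independent of \<open>G\<close> with law \<open>(1 + x \<tau>) S\<close>,
  and \<open>F\<close> is generated by \<open>Y\<close> and \<open>G\<close>.\<close>

locale binary_observation = prob_space M + S: prob_space S
  for M :: "'a measure" and S :: "ereal measure" +
  fixes X :: "'a \<Rightarrow> real" and Y :: "'a \<Rightarrow> ereal" and G F :: "'a measure"
    and m :: "'a \<Rightarrow> real" and \<tau> :: "ereal \<Rightarrow> real"
  assumes X_measurable[measurable]: "X \<in> borel_measurable M"
    and Y_measurable[measurable]: "Y \<in> borel_measurable M"
    and X_values: "\<And>\<omega>. \<omega> \<in> space M \<Longrightarrow> X \<omega> \<in> {-1, 1}"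
    and subalgebra_G: "subalgebra M G"
    and subalgebra_F: "subalgebra M F"
    and m_measurable[measurable]: "m \<in> borel_measurable G"
    and m_bounded: "\<And>\<omega>. \<omega> \<in> space M \<Longrightarrow> \<bar>m \<omega>\<bar> \<le> 1"
    and integral_mult_X: "\<And>h B. h \<in> borel_measurable G \<Longrightarrow> (\<And>\<omega>. \<omega> \<in> space M \<Longrightarrow> \<bar>h \<omega>\<bar> \<le> B) \<Longrightarrow>
       (\<integral>\<omega>. h \<omega> * X \<omega> \<partial>M) = (\<integral>\<omega>. h \<omega> * m \<omega> \<partial>M)"
    and sets_S[measurable_cong]: "sets S = sets (borel :: ereal measure)"
    and \<tau>_measurable[measurable]: "\<tau> \<in> borel_measurable borel"
    and \<tau>_bounded: "\<And>y. \<bar>\<tau> y\<bar> \<le> 1"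
    and \<tau>_symmetric: "distr S borel \<tau> = distr S borel (\<lambda>y. - \<tau> y)"
    and markov: "\<And>x A B. x \<in> {-1, 1} \<Longrightarrow> A \<in> sets (borel :: ereal measure) \<Longrightarrow> B \<in> sets G \<Longrightarrow>
       measure M {\<omega>\<in>space M. X \<omega> = x \<and> \<omega> \<in> B \<and> Y \<omega> \<in> A}
         = measure M {\<omega>\<in>space M. X \<omega> = x \<and> \<omega> \<in> B} * measure (density S (\<lambda>y. ennreal (1 + x * \<tau> y))) A"
    and sets_F: "sets F = sigma_sets (space M)
       {Y -` A \<inter> B | A B. A \<in> sets (borel :: ereal measure) \<and> B \<in> sets G}"
begin

abbreviation channel_law :: "real \<Rightarrow> ereal measure" where
  "channel_law x \<equiv> density S (\<lambda>y. ennreal (1 + x * \<tau> y))"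

definition X_eq :: "real \<Rightarrow> 'a set" where
  "X_eq x = {\<omega>\<in>space M. X \<omega> = x}"

lemma space_G: "space G = space M" and sets_G_subset: "sets G \<subseteq> sets M"
  using subalgebra_G by (auto simp: subalgebra_def)

lemma space_F: "space F = space M"
  using subalgebra_F by (simp add: subalgebra_def)

lemma generator_F: "A \<in> sets (borel :: ereal measure) \<Longrightarrow> B \<in> sets G \<Longrightarrow> Y -` A \<inter> B \<in> sets F"
  unfolding sets_F by blast

lemma m_measurable_F[measurable]: "m \<in> borel_measurable F"
proof (rule measurable_from_subalg[OF _ m_measurable])
  have "B \<in> sets F" if "B \<in> sets G" for B
    using generator_F[of UNIV B] that sets_G_subset sets.sets_into_space by (auto simp: Int_absorb1)
  then show "subalgebra F G" using space_G space_F by (auto simp: subalgebra_def)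
qed

lemma Y_measurable_F[measurable]: "Y \<in> borel_measurable F"
  using generator_F[of _ "space M"] sets.top[of G] by (intro measurableI) (auto simp: space_F space_G)

lemma m_measurable_M[measurable]: "m \<in> borel_measurable M"
  by (rule measurable_from_subalg[OF subalgebra_G m_measurable])

lemma X_eq_sets[measurable]: "X_eq x \<in> sets M"
  unfolding X_eq_def by measurable

lemma indicator_X_eq: "x \<in> {-1, 1} \<Longrightarrow> \<omega> \<in> space M \<Longrightarrow> indicator (X_eq x) \<omega> = (1 + x * X \<omega>) / (2::real)"
  using X_values[of \<omega>] by (auto simp: X_eq_def indicator_def)

lemma channel_density_bounds:
  assumes "x \<in> {-1, 1}" shows "0 \<le> 1 + x * \<tau> y" "1 + x * \<tau> y \<le> 2"
  using assms \<tau>_bounded[of y] by (auto simp: abs_le_iff)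

lemma integral_\<tau>_reflect:
  fixes \<phi> :: "real \<Rightarrow> real" assumes [measurable]: "\<phi> \<in> borel_measurable borel"
  shows "(\<integral>y. \<phi> (\<tau> y) \<partial>S) = (\<integral>y. \<phi> (- \<tau> y) \<partial>S)"
  using arg_cong[OF \<tau>_symmetric, of "\<lambda>N. \<integral>t. \<phi> t \<partial>N"] by (simp add: integral_distr)

lemma integral_\<tau>: "(\<integral>y. \<tau> y \<partial>S) = 0"
  using integral_\<tau>_reflect[of "\<lambda>z. z"] by simp

lemma prob_space_channel_law:
  assumes x: "x \<in> {-1, 1}" shows "prob_space (channel_law x)"
proof
  have "integrable S (\<lambda>y. 1 + x * \<tau> y)"
    using channel_density_bounds[OF x] by (intro S.integrable_bounded[where B=2]) (auto simp: abs_le_iff)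
  then have "emeasure (channel_law x) (space S) = ennreal (\<integral>y. 1 + x * \<tau> y \<partial>S)"
    using channel_density_bounds[OF x] by (simp add: emeasure_density nn_integral_eq_integral)
  also have "(\<integral>y. 1 + x * \<tau> y \<partial>S) = 1"
    using integral_\<tau> S.integrable_bounded[of \<tau> 1] \<tau>_bounded by (simp add: S.prob_space)
  finally show "emeasure (channel_law x) (space (channel_law x)) = 1" by simp
qed

lemma id_measurable_G[measurable]: "(\<lambda>\<omega>. \<omega>) \<in> measurable M G"
proof (rule measurableI)
  fix A assume "A \<in> sets G"
  then show "(\<lambda>\<omega>. \<omega>) -` A \<inter> space M \<in> sets M"
    using sets_G_subset sets.sets_into_space by (auto simp: Int_absorb2)
qed (simp add: space_G)

definition restr_M :: "real \<Rightarrow> 'a measure" where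
  "restr_M x = density M (indicator (X_eq x))"

definition restr_G :: "real \<Rightarrow> 'a measure" where
  "restr_G x = distr (restr_M x) G (\<lambda>\<omega>. \<omega>)"

definition restr_GY :: "real \<Rightarrow> ('a \<times> ereal) measure" where
  "restr_GY x = distr (restr_M x) (G \<Otimes>\<^sub>M borel) (\<lambda>\<omega>. (\<omega>, Y \<omega>))"

lemma sets_restr_M[measurable_cong]: "sets (restr_M x) = sets M"
  by (simp add: restr_M_def)

lemma sets_restr_G[measurable_cong]: "sets (restr_G x) = sets G"
  by (simp add: restr_G_def)

lemma integral_restr_M:
  fixes f :: "'a \<Rightarrow> real" assumes "f \<in> borel_measurable M"
  shows "(\<integral>\<omega>. f \<omega> \<partial>restr_M x) = (\<integral>\<omega>. indicator (X_eq x) \<omega> * f \<omega> \<partial>M)"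
proof -
  have "restr_M x = density M (\<lambda>\<omega>. ennreal (indicator (X_eq x) \<omega>))"
    by (simp add: restr_M_def ennreal_indicator)
  then show ?thesis using integral_density[OF assms, of "indicator (X_eq x)"] by simp
qed

lemma emeasure_restr_G: "A \<in> sets G \<Longrightarrow> emeasure (restr_G x) A = emeasure M (X_eq x \<inter> A)"
proof -
  assume A: "A \<in> sets G"
  then have "A \<in> sets M" "(\<lambda>\<omega>. \<omega>) -` A \<inter> space (restr_M x) = A"
    using sets_G_subset sets.sets_into_space by (auto simp: restr_M_def)
  then show ?thesis
    using A by (simp add: restr_G_def restr_M_def emeasure_distr emeasure_restricted)
qed

lemma finite_measure_restr_M: "finite_measure (restr_M x)"
  by (rule finite_measureI) (simp add: restr_M_def emeasure_restricted emeasure_eq_measure)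

lemma finite_measure_restr_G: "finite_measure (restr_G x)"
  unfolding restr_G_def by (rule finite_measure.finite_measure_distr[OF finite_measure_restr_M]) simp

lemma finite_measure_restr_GY: "finite_measure (restr_GY x)"
  unfolding restr_GY_def by (rule finite_measure.finite_measure_distr[OF finite_measure_restr_M]) simp

text \<open>The Markov property says exactly that \<open>(\<omega>, Y \<omega>)\<close> has product law on \<open>{X = x}\<close>.\<close>

lemma restr_GY_eq_pair_measure:
  assumes x: "x \<in> {-1, 1}" shows "restr_G x \<Otimes>\<^sub>M channel_law x = restr_GY x"
proof (rule pair_measure_eqI)
  interpret Q: prob_space "channel_law x" by (rule prob_space_channel_law[OF x])
  interpret L: finite_measure "restr_G x" by (rule finite_measure_restr_G)
  show "sigma_finite_measure (restr_G x)" "sigma_finite_measure (channel_law x)" by unfold_locales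
  show "sets (restr_G x \<Otimes>\<^sub>M channel_law x) = sets (restr_GY x)"
    by (simp add: restr_GY_def sets_pair_measure_cong[OF sets_restr_G sets_S])
  fix A B assume "A \<in> sets (restr_G x)" "B \<in> sets (channel_law x)"
  then have A: "A \<in> sets G" and B: "B \<in> sets (borel :: ereal measure)" by (simp_all add: sets_restr_G sets_S)
  have "emeasure (restr_GY x) (A \<times> B) = emeasure M (X_eq x \<inter> ((\<lambda>\<omega>. (\<omega>, Y \<omega>)) -` (A \<times> B) \<inter> space M))"
    using A B by (simp add: restr_GY_def emeasure_distr restr_M_def emeasure_restricted)
  also have "X_eq x \<inter> ((\<lambda>\<omega>. (\<omega>, Y \<omega>)) -` (A \<times> B) \<inter> space M) = {\<omega>\<in>space M. X \<omega> = x \<and> \<omega> \<in> A \<and> Y \<omega> \<in> B}"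
    by (auto simp: X_eq_def)
  also have "X_eq x \<inter> A = {\<omega>\<in>space M. X \<omega> = x \<and> \<omega> \<in> A}"
    by (auto simp: X_eq_def)
  ultimately show "emeasure (restr_G x) A * emeasure (channel_law x) B = emeasure (restr_GY x) (A \<times> B)"
    using markov[OF x B A]
    by (simp add: emeasure_restr_G[OF A] emeasure_eq_measure Q.emeasure_eq_measure ennreal_mult)
qed

lemma abs_integral_channel_density_le:
  fixes f :: "ereal \<Rightarrow> real"
  assumes x: "x \<in> {-1, 1}" and f[measurable]: "f \<in> borel_measurable borel" and fb: "\<And>y. \<bar>f y\<bar> \<le> B"
  shows "\<bar>\<integral>y. f y * (1 + x * \<tau> y) \<partial>S\<bar> \<le> 2 * B"
proof (rule S.abs_integral_le_bound)
  fix y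
  have "\<bar>f y * (1 + x * \<tau> y)\<bar> = \<bar>f y\<bar> * (1 + x * \<tau> y)"
    using channel_density_bounds[OF x] by (simp add: abs_mult)
  also have "\<dots> \<le> B * 2"
    using fb[of y] channel_density_bounds[OF x, of y] by (intro mult_mono) auto
  finally show "\<bar>f y * (1 + x * \<tau> y)\<bar> \<le> 2 * B" by simp
qed simp

lemma integral_channel_density_linear:
  fixes f :: "ereal \<Rightarrow> real"
  assumes f[measurable]: "f \<in> borel_measurable borel" and fb: "\<And>y. \<bar>f y\<bar> \<le> B"
  shows "(\<integral>y. f y * (1 + c * \<tau> y) \<partial>S) = (\<integral>y. f y \<partial>S) + c * (\<integral>y. f y * \<tau> y \<partial>S)"
proof -
  have "\<bar>f y * \<tau> y\<bar> \<le> B" for y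
    using fb[of y] \<tau>_bounded[of y] by (rule abs_mult_le_bound)
  then have "integrable S f" "integrable S (\<lambda>y. f y * \<tau> y)"
    using fb by (intro S.integrable_bounded[where B=B]; simp)+
  then have "(\<integral>y. f y + c * (f y * \<tau> y) \<partial>S) = (\<integral>y. f y \<partial>S) + c * (\<integral>y. f y * \<tau> y \<partial>S)"
    by simp
  then show ?thesis by (simp add: algebra_simps)
qed

lemma integral_X_eq_mult_G:
  fixes h :: "'a \<Rightarrow> real"
  assumes x: "x \<in> {-1, 1}" and h[measurable]: "h \<in> borel_measurable G"
    and hb: "\<And>\<omega>. \<omega> \<in> space M \<Longrightarrow> \<bar>h \<omega>\<bar> \<le> B"
  shows "(\<integral>\<omega>. indicator (X_eq x) \<omega> * h \<omega> \<partial>M) = (\<integral>\<omega>. h \<omega> * ((1 + x * m \<omega>) / 2) \<partial>M)"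
proof -
  have [measurable]: "h \<in> borel_measurable M" by (rule measurable_from_subalg[OF subalgebra_G h])
  have "\<bar>h \<omega> * X \<omega>\<bar> \<le> B" "\<bar>h \<omega> * m \<omega>\<bar> \<le> B" if "\<omega> \<in> space M" for \<omega>
    using hb[OF that] X_values[OF that] m_bounded[OF that] by (auto intro: abs_mult_le_bound)
  then have int: "integrable M h" "integrable M (\<lambda>\<omega>. h \<omega> * X \<omega>)" "integrable M (\<lambda>\<omega>. h \<omega> * m \<omega>)"
    using hb by (intro integrable_bounded[where B=B]; simp)+
  have "(\<integral>\<omega>. indicator (X_eq x) \<omega> * h \<omega> \<partial>M) = (\<integral>\<omega>. h \<omega> / 2 + x / 2 * (h \<omega> * X \<omega>) \<partial>M)"
    using x by (intro Bochner_Integration.integral_cong) (simp_all add: indicator_X_eq field_simps)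
  also have "\<dots> = (\<integral>\<omega>. h \<omega> / 2 \<partial>M) + x / 2 * (\<integral>\<omega>. h \<omega> * X \<omega> \<partial>M)"
    using int by simp
  also have "(\<integral>\<omega>. h \<omega> * X \<omega> \<partial>M) = (\<integral>\<omega>. h \<omega> * m \<omega> \<partial>M)"
    by (rule integral_mult_X[OF h hb])
  also have "(\<integral>\<omega>. h \<omega> / 2 \<partial>M) + x / 2 * (\<integral>\<omega>. h \<omega> * m \<omega> \<partial>M) = (\<integral>\<omega>. h \<omega> / 2 + x / 2 * (h \<omega> * m \<omega>) \<partial>M)"
    using int by simp
  also have "\<dots> = (\<integral>\<omega>. h \<omega> * ((1 + x * m \<omega>) / 2) \<partial>M)"
    by (simp add: field_simps)
  finally show ?thesis .
qed

lemma integral_X_eq_pair: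
  fixes g :: "'a \<times> ereal \<Rightarrow> real"
  assumes x: "x \<in> {-1, 1}" and g[measurable]: "g \<in> borel_measurable (G \<Otimes>\<^sub>M borel)"
    and gb: "\<And>\<omega> y. \<omega> \<in> space M \<Longrightarrow> \<bar>g (\<omega>, y)\<bar> \<le> B"
  shows "(\<integral>\<omega>. indicator (X_eq x) \<omega> * g (\<omega>, Y \<omega>) \<partial>M)
       = (\<integral>\<omega>. indicator (X_eq x) \<omega> * (\<integral>y. g (\<omega>, y) * (1 + x * \<tau> y) \<partial>S) \<partial>M)"
proof -
  interpret Q: prob_space "channel_law x" by (rule prob_space_channel_law[OF x])
  interpret L: finite_measure "restr_G x" by (rule finite_measure_restr_G)
  interpret LQ: pair_sigma_finite "restr_G x" "channel_law x" by unfold_locales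
  interpret GY: finite_measure "restr_GY x" by (rule finite_measure_restr_GY)
  define h where "h \<omega> = (\<integral>y. g (\<omega>, y) * (1 + x * \<tau> y) \<partial>S)" for \<omega>
  have [measurable]: "h \<in> borel_measurable G" unfolding h_def by measurable
  have "integrable (restr_GY x) g"
    using gb by (intro GY.integrable_bounded) (auto simp: restr_GY_def space_pair_measure space_G)
  then have int: "integrable (restr_G x \<Otimes>\<^sub>M channel_law x) g"
    by (simp add: restr_GY_eq_pair_measure[OF x])
  have "(\<integral>\<omega>. indicator (X_eq x) \<omega> * g (\<omega>, Y \<omega>) \<partial>M) = (\<integral>z. g z \<partial>restr_GY x)"
    by (simp add: integral_restr_M[symmetric] restr_GY_def integral_distr)
  also have "\<dots> = (\<integral>\<omega>. (\<integral>y. g (\<omega>, y) \<partial>channel_law x) \<partial>restr_G x)"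
    unfolding restr_GY_eq_pair_measure[OF x, symmetric] by (rule LQ.integral_fst'[OF int, symmetric])
  also have "\<dots> = (\<integral>\<omega>. h \<omega> \<partial>restr_G x)"
  proof (intro Bochner_Integration.integral_cong refl)
    fix \<omega> assume "\<omega> \<in> space (restr_G x)"
    then have [measurable]: "\<omega> \<in> space G" by (simp add: restr_G_def)
    show "(\<integral>y. g (\<omega>, y) \<partial>channel_law x) = h \<omega>"
      using channel_density_bounds[OF x] by (simp add: h_def integral_density mult.commute)
  qed
  also have "\<dots> = (\<integral>\<omega>. indicator (X_eq x) \<omega> * h \<omega> \<partial>M)"
    by (simp add: restr_G_def integral_distr integral_restr_M)
  finally show ?thesis unfolding h_def .
qed

lemma integral_X_eq_pair_prior:
  fixes g :: "'a \<times> ereal \<Rightarrow> real"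
  assumes x: "x \<in> {-1, 1}" and g[measurable]: "g \<in> borel_measurable (G \<Otimes>\<^sub>M borel)"
    and gb: "\<And>\<omega> y. \<omega> \<in> space M \<Longrightarrow> \<bar>g (\<omega>, y)\<bar> \<le> B"
  shows "(\<integral>\<omega>. indicator (X_eq x) \<omega> * g (\<omega>, Y \<omega>) \<partial>M)
       = (\<integral>\<omega>. (\<integral>y. g (\<omega>, y) * (1 + x * \<tau> y) \<partial>S) * ((1 + x * m \<omega>) / 2) \<partial>M)"
proof -
  have bound: "\<bar>\<integral>y. g (\<omega>, y) * (1 + x * \<tau> y) \<partial>S\<bar> \<le> 2 * B" if "\<omega> \<in> space M" for \<omega>
  proof -
    from that have [measurable]: "\<omega> \<in> space G" by (simp add: space_G)
    show ?thesis using gb[OF that] by (intro abs_integral_channel_density_le[OF x]) simp_all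
  qed
  have "(\<integral>\<omega>. indicator (X_eq x) \<omega> * g (\<omega>, Y \<omega>) \<partial>M)
      = (\<integral>\<omega>. indicator (X_eq x) \<omega> * (\<integral>y. g (\<omega>, y) * (1 + x * \<tau> y) \<partial>S) \<partial>M)"
    by (rule integral_X_eq_pair[OF x g gb])
  also have "\<dots> = (\<integral>\<omega>. (\<integral>y. g (\<omega>, y) * (1 + x * \<tau> y) \<partial>S) * ((1 + x * m \<omega>) / 2) \<partial>M)"
    by (rule integral_X_eq_mult_G[OF x _ bound]) measurable
  finally show ?thesis .
qed

lemma integral_pair_Y:
  fixes g :: "'a \<times> ereal \<Rightarrow> real"
  assumes g[measurable]: "g \<in> borel_measurable (G \<Otimes>\<^sub>M borel)"
    and gb: "\<And>\<omega> y. \<omega> \<in> space M \<Longrightarrow> \<bar>g (\<omega>, y)\<bar> \<le> B"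
  shows "(\<integral>\<omega>. g (\<omega>, Y \<omega>) \<partial>M) = (\<integral>\<omega>. (\<integral>y. g (\<omega>, y) * (1 + m \<omega> * \<tau> y) \<partial>S) \<partial>M)"
proof -
  define H where "H c \<omega> = (\<integral>y. g (\<omega>, y) * (1 + c * \<tau> y) \<partial>S) * ((1 + c * m \<omega>) / 2)" for c \<omega>
  have H_integrable: "integrable M (H c)" if c: "c \<in> {-1, 1}" for c
  proof (rule integrable_bounded[where B="2 * B"])
    show "H c \<in> borel_measurable M" unfolding H_def by measurable
    fix \<omega> assume \<omega>: "\<omega> \<in> space M"
    then have [measurable]: "\<omega> \<in> space G" by (simp add: space_G)
    have "\<bar>\<integral>y. g (\<omega>, y) * (1 + c * \<tau> y) \<partial>S\<bar> \<le> 2 * B"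
      using gb[OF \<omega>] by (intro abs_integral_channel_density_le[OF c]) simp_all
    moreover have "\<bar>(1 + c * m \<omega>) / 2\<bar> \<le> 1" using c m_bounded[OF \<omega>] by (auto simp: abs_le_iff)
    ultimately show "\<bar>H c \<omega>\<bar> \<le> 2 * B" unfolding H_def by (rule abs_mult_le_bound)
  qed
  have indicator_integrable: "integrable M (\<lambda>\<omega>. indicator (X_eq c) \<omega> * g (\<omega>, Y \<omega>))" for c
    using gb by (intro integrable_bounded[where B=B])
      (auto simp: indicator_def intro: order_trans[OF abs_ge_zero gb])
  have "(\<integral>\<omega>. g (\<omega>, Y \<omega>) \<partial>M)
      = (\<integral>\<omega>. indicator (X_eq 1) \<omega> * g (\<omega>, Y \<omega>) + indicator (X_eq (-1)) \<omega> * g (\<omega>, Y \<omega>) \<partial>M)"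
    using X_values by (intro Bochner_Integration.integral_cong) (auto simp: X_eq_def indicator_def)
  also have "\<dots> = (\<integral>\<omega>. indicator (X_eq 1) \<omega> * g (\<omega>, Y \<omega>) \<partial>M)
      + (\<integral>\<omega>. indicator (X_eq (-1)) \<omega> * g (\<omega>, Y \<omega>) \<partial>M)"
    by (rule Bochner_Integration.integral_add[OF indicator_integrable indicator_integrable])
  also have "\<dots> = (\<integral>\<omega>. H 1 \<omega> \<partial>M) + (\<integral>\<omega>. H (-1) \<omega> \<partial>M)"
    using integral_X_eq_pair_prior[of 1, OF _ g gb] integral_X_eq_pair_prior[of "-1", OF _ g gb]
    by (simp only: H_def insert_iff simp_thms)
  also have "\<dots> = (\<integral>\<omega>. H 1 \<omega> + H (-1) \<omega> \<partial>M)"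
    using H_integrable by simp
  also have "\<dots> = (\<integral>\<omega>. (\<integral>y. g (\<omega>, y) * (1 + m \<omega> * \<tau> y) \<partial>S) \<partial>M)"
  proof (intro Bochner_Integration.integral_cong refl)
    fix \<omega> assume \<omega>: "\<omega> \<in> space M"
    then have [measurable]: "\<omega> \<in> space G" by (simp add: space_G)
    have "(\<lambda>y. g (\<omega>, y)) \<in> borel_measurable borel" by measurable
    note linear = integral_channel_density_linear[OF this gb[OF \<omega>]]
    show "H 1 \<omega> + H (-1) \<omega> = (\<integral>y. g (\<omega>, y) * (1 + m \<omega> * \<tau> y) \<partial>S)"
      unfolding H_def linear by (simp add: field_simps)
  qed
  finally show ?thesis .
qed

lemma set_integral_X_eq_generator:
  assumes x: "x \<in> {-1, 1}" and A[measurable]: "A \<in> sets (borel :: ereal measure)"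
    and B[measurable]: "B \<in> sets G"
  shows "(\<integral>\<omega>\<in>Y -` A \<inter> B. indicator (X_eq x) \<omega> \<partial>M)
       = (\<integral>\<omega>\<in>Y -` A \<inter> B. posterior x (m \<omega>) (\<tau> (Y \<omega>)) \<partial>M)"
proof -
  define g :: "'a \<times> ereal \<Rightarrow> real" where "g z = indicator B (fst z) * indicator A (snd z)" for z
  define g' where "g' z = posterior x (m (fst z)) (\<tau> (snd z)) * g z" for z
  have [measurable]: "g \<in> borel_measurable (G \<Otimes>\<^sub>M borel)" "g' \<in> borel_measurable (G \<Otimes>\<^sub>M borel)"
    unfolding g_def g'_def by measurable
  have g'_bounded: "\<bar>g' (\<omega>, y)\<bar> \<le> 1" if "\<omega> \<in> space M" for \<omega> y
    using posterior_bounds[OF m_bounded[OF that] \<tau>_bounded x] by (simp add: g'_def g_def indicator_def)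
  have indicator: "indicator (Y -` A \<inter> B) \<omega> = g (\<omega>, Y \<omega>)" for \<omega>
    by (auto simp: g_def indicator_def)
  have weights: "g' (\<omega>, y) * (1 + m \<omega> * \<tau> y) = g (\<omega>, y) * (1 + x * \<tau> y) * ((1 + x * m \<omega>) / 2)"
    if "\<omega> \<in> space M" for \<omega> y
  proof -
    have "g' (\<omega>, y) * (1 + m \<omega> * \<tau> y) = g (\<omega>, y) * (posterior x (m \<omega>) (\<tau> y) * (1 + m \<omega> * \<tau> y))"
      by (simp add: g'_def)
    then show ?thesis by (simp add: posterior_mult_normaliser[OF m_bounded[OF that] \<tau>_bounded x])
  qed
  have "(\<integral>\<omega>\<in>Y -` A \<inter> B. indicator (X_eq x) \<omega> \<partial>M) = (\<integral>\<omega>. indicator (X_eq x) \<omega> * g (\<omega>, Y \<omega>) \<partial>M)"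
    by (simp add: set_lebesgue_integral_def indicator mult.commute)
  also have "\<dots> = (\<integral>\<omega>. (\<integral>y. g (\<omega>, y) * (1 + x * \<tau> y) \<partial>S) * ((1 + x * m \<omega>) / 2) \<partial>M)"
    by (rule integral_X_eq_pair_prior[OF x, of _ 1]) (simp_all add: g_def indicator_def)
  also have "\<dots> = (\<integral>\<omega>. (\<integral>y. g' (\<omega>, y) * (1 + m \<omega> * \<tau> y) \<partial>S) \<partial>M)"
    using weights by (intro Bochner_Integration.integral_cong refl) (simp only: integral_mult_left_zero[symmetric])
  also have "\<dots> = (\<integral>\<omega>. g' (\<omega>, Y \<omega>) \<partial>M)"
    by (rule integral_pair_Y[symmetric]) (use g'_bounded in simp_all)
  also have "\<dots> = (\<integral>\<omega>\<in>Y -` A \<inter> B. posterior x (m \<omega>) (\<tau> (Y \<omega>)) \<partial>M)"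
    by (simp add: set_lebesgue_integral_def indicator g'_def mult.commute)
  finally show ?thesis .
qed

lemma real_cond_exp_X_eq:
  assumes x: "x \<in> {-1, 1}"
  shows "AE \<omega> in M. real_cond_exp M F (indicator (X_eq x)) \<omega> = posterior x (m \<omega>) (\<tau> (Y \<omega>))"
proof -
  interpret F: finite_measure_subalgebra M F by unfold_locales (rule subalgebra_F)
  let ?E = "{Y -` A \<inter> B | A B. A \<in> sets (borel :: ereal measure) \<and> B \<in> sets G}"
  have "Int_stable ?E"
  proof (rule Int_stableI)
    fix a b assume "a \<in> ?E" "b \<in> ?E"
    then obtain A A' B B' where "a = Y -` A \<inter> B" "b = Y -` A' \<inter> B'"
      and "A \<in> sets borel" "A' \<in> sets borel" "B \<in> sets G" "B' \<in> sets G" by blast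
    then show "a \<inter> b \<in> ?E" by (intro CollectI exI[of _ "A \<inter> A'"] exI[of _ "B \<inter> B'"]) auto
  qed
  moreover have "space M \<in> ?E"
    using sets.top[of G] by (intro CollectI exI[of _ UNIV] exI[of _ "space M"]) (simp add: space_G)
  moreover have "0 \<le> posterior x (m \<omega>) (\<tau> (Y \<omega>))" "posterior x (m \<omega>) (\<tau> (Y \<omega>)) \<le> 1"
    if "\<omega> \<in> space M" for \<omega>
    using posterior_bounds[OF m_bounded[OF that] \<tau>_bounded x] by auto
  ultimately show ?thesis
    using set_integral_X_eq_generator[OF x]
    by (intro F.real_cond_exp_charact_generator[OF sets_F]) (auto intro!: integrable_bounded[where B=1])
qed

lemma cond_entropy_bits_eq_integral_posterior_entropy:
  "cond_entropy_bits M {-1, 1} X F = (\<integral>\<omega>. posterior_entropy (m \<omega>) (\<tau> (Y \<omega>)) \<partial>M)"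
proof -
  have "cond_entropy_bits M {-1, 1} X F = (\<integral>\<omega>. entropy_term (real_cond_exp M F (indicator (X_eq 1)) \<omega>)
      + entropy_term (real_cond_exp M F (indicator (X_eq (-1))) \<omega>) \<partial>M)"
    by (simp add: cond_entropy_bits_def X_eq_def[symmetric] entropy_term_def Let_def add.commute)
  also have "\<dots> = (\<integral>\<omega>. posterior_entropy (m \<omega>) (\<tau> (Y \<omega>)) \<partial>M)"
    using real_cond_exp_X_eq[of 1] real_cond_exp_X_eq[of "-1"]
    by (intro integral_cong_AE) (auto simp: entropy_term_def posterior_entropy_def)
  finally show ?thesis .
qed

lemma integrable_\<tau>_power: "integrable S (\<lambda>y. \<tau> y ^ n)"
  using \<tau>_bounded by (intro S.integrable_bounded[where B=1]) (auto simp: power_abs intro: power_le_one)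

lemma moment_bounds: "0 \<le> (\<integral>y. \<tau> y ^ (2 * n) \<partial>S)" "(\<integral>y. \<tau> y ^ (2 * n) \<partial>S) \<le> 1"
  using integrable_\<tau>_power even_power_bounds[OF \<tau>_bounded]
  by (auto intro!: S.integral_ge_const S.integral_le_const)

lemma integral_weighted_posterior_entropy:
  assumes a: "\<bar>a\<bar> \<le> 1"
  shows "(\<integral>y. (1 + a * \<tau> y) * posterior_entropy a (\<tau> y) \<partial>S)
    = (\<integral>y. binary_entropy a + binary_entropy (\<tau> y) - binary_entropy (a * \<tau> y) \<partial>S)"
proof -
  define K where "K t = (1 + a * t) * posterior_entropy a t" for t
  have [measurable]: "K \<in> borel_measurable borel" unfolding K_def by measurable
  have "\<bar>K t\<bar> \<le> 4 / ln 2" if "\<bar>t\<bar> \<le> 1" for t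
    unfolding K_def by (rule abs_weighted_posterior_entropy_le[OF a that])
  then have "integrable S (\<lambda>y. K (\<tau> y))" "integrable S (\<lambda>y. K (- \<tau> y))"
    using \<tau>_bounded by (intro S.integrable_bounded[where B="4 / ln 2"]; simp)+
  then have "(\<integral>y. K (\<tau> y) \<partial>S) = (\<integral>y. (K (\<tau> y) + K (- \<tau> y)) / 2 \<partial>S)"
    using integral_\<tau>_reflect[of K] by simp
  also have "\<dots> = (\<integral>y. binary_entropy a + binary_entropy (\<tau> y) - binary_entropy (a * \<tau> y) \<partial>S)"
    using weighted_posterior_entropy_symmetrised[OF a \<tau>_bounded]
    by (intro Bochner_Integration.integral_cong) (simp_all add: K_def)
  finally show ?thesis by (simp add: K_def)
qed

lemma sums_integral_weighted_posterior_entropy: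
  assumes a: "\<bar>a\<bar> \<le> 1"
  shows "(\<lambda>k. ck (Suc k) * (1 - a ^ (2 * Suc k)) * (1 - (\<integral>y. \<tau> y ^ (2 * Suc k) \<partial>S)))
           sums (\<integral>y. (1 + a * \<tau> y) * posterior_entropy a (\<tau> y) \<partial>S)"
proof -
  have sums: "(\<lambda>k. \<integral>y. ck (Suc k) * (1 - a ^ (2 * Suc k)) * (1 - \<tau> y ^ (2 * Suc k)) \<partial>S)
      sums (\<integral>y. (1 + a * \<tau> y) * posterior_entropy a (\<tau> y) \<partial>S)"
    unfolding integral_weighted_posterior_entropy[OF a]
  proof (rule S.sums_integral_dominated[OF sums_summable[OF sums_ck_Suc]])
    show "\<bar>ck (Suc k) * (1 - a ^ (2 * Suc k)) * (1 - \<tau> y ^ (2 * Suc k))\<bar> \<le> ck (Suc k)" for k y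
      using even_power_bounds[OF a, of "Suc k"] even_power_bounds[OF \<tau>_bounded, of y "Suc k"]
      by (intro abs_ck_Suc_mult_le) auto
    show "(\<lambda>k. ck (Suc k) * (1 - a ^ (2 * Suc k)) * (1 - \<tau> y ^ (2 * Suc k)))
        sums (binary_entropy a + binary_entropy (\<tau> y) - binary_entropy (a * \<tau> y))" for y
      by (rule sums_binary_entropy_defect[OF a \<tau>_bounded])
  qed measurable
  have moment: "(\<integral>y. ck (Suc k) * (1 - a ^ (2 * Suc k)) * (1 - \<tau> y ^ (2 * Suc k)) \<partial>S)
      = ck (Suc k) * (1 - a ^ (2 * Suc k)) * (1 - (\<integral>y. \<tau> y ^ (2 * Suc k) \<partial>S))" for k
    by (simp add: integrable_\<tau>_power S.prob_space del: power_Suc)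
  show ?thesis using sums unfolding moment .
qed

lemma integrable_m_power: "integrable M (\<lambda>\<omega>. m \<omega> ^ n)"
  using m_bounded by (intro integrable_bounded[where B=1]) (auto simp: power_abs intro: power_le_one)

theorem sums_cond_entropy_bits:
  "(\<lambda>k. ck (Suc k) * (1 - (\<integral>y. \<tau> y ^ (2 * Suc k) \<partial>S)) * (1 - (\<integral>\<omega>. m \<omega> ^ (2 * Suc k) \<partial>M)))
     sums cond_entropy_bits M {-1, 1} X F"
proof -
  define q where "q k = (\<integral>y. \<tau> y ^ (2 * Suc k) \<partial>S)" for k
  define f where "f k \<omega> = ck (Suc k) * (1 - m \<omega> ^ (2 * Suc k)) * (1 - q k)" for k \<omega>
  have "(\<integral>\<omega>. posterior_entropy (m \<omega>) (\<tau> (Y \<omega>)) \<partial>M)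
      = (\<integral>\<omega>. (\<integral>y. posterior_entropy (m \<omega>) (\<tau> y) * (1 + m \<omega> * \<tau> y) \<partial>S) \<partial>M)"
    using integral_pair_Y[where g="\<lambda>z. posterior_entropy (m (fst z)) (\<tau> (snd z))" and B="2 / ln 2"]
      posterior_entropy_bounds[OF m_bounded \<tau>_bounded] by simp
  then have entropy: "cond_entropy_bits M {-1, 1} X F
      = (\<integral>\<omega>. (\<integral>y. (1 + m \<omega> * \<tau> y) * posterior_entropy (m \<omega>) (\<tau> y) \<partial>S) \<partial>M)"
    by (simp add: cond_entropy_bits_eq_integral_posterior_entropy mult.commute)
  have "(\<lambda>k. \<integral>\<omega>. f k \<omega> \<partial>M) sums cond_entropy_bits M {-1, 1} X F"
    unfolding entropy
  proof (rule sums_integral_dominated[OF sums_summable[OF sums_ck_Suc]])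
    fix k \<omega> assume \<omega>: "\<omega> \<in> space M"
    show "\<bar>f k \<omega>\<bar> \<le> ck (Suc k)"
      using even_power_bounds[OF m_bounded[OF \<omega>], of "Suc k"] moment_bounds[of "Suc k"]
      unfolding f_def q_def by (intro abs_ck_Suc_mult_le) auto
    show "(\<lambda>k. f k \<omega>) sums (\<integral>y. (1 + m \<omega> * \<tau> y) * posterior_entropy (m \<omega>) (\<tau> y) \<partial>S)"
      unfolding f_def q_def by (rule sums_integral_weighted_posterior_entropy[OF m_bounded[OF \<omega>]])
  qed (simp_all add: f_def)
  moreover have "(\<integral>\<omega>. f k \<omega> \<partial>M) = ck (Suc k) * (1 - q k) * (1 - (\<integral>\<omega>. m \<omega> ^ (2 * Suc k) \<partial>M))" for k
    by (simp add: f_def integrable_m_power prob_space algebra_simps del: power_Suc)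
  ultimately show ?thesis unfolding q_def by simp
qed

end

lemma ereal_minus_one_times: "ereal (-1) * y = - y"
  by (cases y) auto

locale bms_channel =
  fixes P :: "ereal measure"
  assumes bms: "bms P"
begin

lemma prob_space_P: "prob_space P" and sets_P[measurable_cong]: "sets P = sets (borel :: ereal measure)"
  using bms by (simp_all add: bms_def)

sublocale P: prob_space P by (rule prob_space_P)

abbreviation J :: "(real \<times> ereal) measure" where
  "J \<equiv> bms_uniform_joint P"

lemma bms_uniform_joint_eq:
  "J = distr (uniform_count_measure {-1, 1} \<Otimes>\<^sub>M P) (borel \<Otimes>\<^sub>M borel) (\<lambda>z. (fst z, ereal (fst z) * snd z))"
  unfolding bms_uniform_joint_def by (simp add: case_prod_beta')

lemma measurable_bms_input_output[measurable]:
  "(\<lambda>z. (fst z, ereal (fst z) * snd z)) \<in> measurable (uniform_count_measure {-1, 1} \<Otimes>\<^sub>M P) (borel \<Otimes>\<^sub>M borel)"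
proof -
  have "(\<lambda>x. x) \<in> measurable (uniform_count_measure {-1, 1}) (borel :: real measure)"
    by (simp add: measurable_cong_sets[OF sets_uniform_count_measure_count_space refl])
  then have [measurable]: "fst \<in> measurable (uniform_count_measure {-1, 1} \<Otimes>\<^sub>M P) (borel :: real measure)"
    by (rule measurable_compose[OF measurable_fst])
  have [measurable]: "snd \<in> measurable (uniform_count_measure {-1, 1::real} \<Otimes>\<^sub>M P) (borel :: ereal measure)"
    using measurable_snd by (simp add: measurable_cong_sets[OF refl sets_P])
  show ?thesis by (intro measurable_Pair borel_measurable_ereal_times) simp_all
qed

lemma prob_space_J: "prob_space J"
proof -
  interpret U: prob_space "uniform_count_measure {-1, 1::real}"
    by (rule prob_space_uniform_count_measure) auto
  interpret UP: pair_prob_space "uniform_count_measure {-1, 1::real}" P ..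
  show ?thesis unfolding bms_uniform_joint_eq by (rule UP.prob_space_distr) simp
qed

sublocale J: prob_space J by (rule prob_space_J)

lemma sets_J[measurable_cong]: "sets J = sets (borel \<Otimes>\<^sub>M borel :: (real \<times> ereal) measure)"
  by (simp add: bms_uniform_joint_eq)

lemma integral_J:
  fixes h :: "real \<times> ereal \<Rightarrow> real"
  assumes h[measurable]: "h \<in> borel_measurable (borel \<Otimes>\<^sub>M borel)"
    and hb: "\<And>x y. x \<in> {-1, 1} \<Longrightarrow> \<bar>h (x, y)\<bar> \<le> B"
  shows "(\<integral>z. h z \<partial>J) = ((\<integral>y. h (1, y) \<partial>P) + (\<integral>y. h (-1, - y) \<partial>P)) / 2"
proof -
  interpret U: prob_space "uniform_count_measure {-1, 1::real}"
    by (rule prob_space_uniform_count_measure) auto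
  interpret UP: pair_prob_space "uniform_count_measure {-1, 1::real}" P ..
  have "integrable (uniform_count_measure {-1, 1} \<Otimes>\<^sub>M P) (\<lambda>z. h (fst z, ereal (fst z) * snd z))"
    using hb by (intro UP.integrable_bounded[where B=B])
      (auto simp: space_pair_measure space_uniform_count_measure)
  have "(\<integral>z. h z \<partial>J) = (\<integral>z. h (fst z, ereal (fst z) * snd z) \<partial>(uniform_count_measure {-1, 1} \<Otimes>\<^sub>M P))"
    unfolding bms_uniform_joint_eq by (rule integral_distr) simp_all
  also have "\<dots> = (\<integral>x. (\<integral>y. h (x, ereal x * y) \<partial>P) \<partial>uniform_count_measure {-1, 1})"
    using UP.integral_fst'[OF \<open>integrable _ _\<close>] by simp
  also have "\<dots> = ((\<integral>y. h (1, y) \<partial>P) + (\<integral>y. h (-1, - y) \<partial>P)) / 2"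
    by (simp add: integral_uniform_count_measure ereal_minus_one_times)
  finally show ?thesis .
qed

lemma sets_uminus_preimage[measurable]:
  "A \<in> sets (borel :: ereal measure) \<Longrightarrow> {y :: ereal. - y \<in> A} \<in> sets borel"
  using measurable_sets[of "uminus :: ereal \<Rightarrow> ereal" borel borel A] by (simp add: vimage_def)

lemma indicator_uminus: "indicator A (- y) = (indicator {y :: ereal. - y \<in> A} y :: real)"
  by (simp add: indicator_def)

lemma integral_P_indicator_uminus: "(\<integral>y. indicator A (- y) \<partial>P) = measure P {y. - y \<in> A}"
  by (simp add: indicator_uminus[abs_def] sets_eq_imp_space_eq[OF sets_P])

definition output_law :: "ereal measure" where
  "output_law = distr J borel snd"

lemma prob_space_output_law: "prob_space output_law"
  unfolding output_law_def by (rule prob_space.prob_space_distr[OF prob_space_J]) simp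

lemma sets_output_law[measurable_cong]: "sets output_law = sets (borel :: ereal measure)"
  by (simp add: output_law_def)

lemma integral_output_law:
  fixes \<phi> :: "ereal \<Rightarrow> real"
  assumes [measurable]: "\<phi> \<in> borel_measurable borel" and "\<And>y. \<bar>\<phi> y\<bar> \<le> B"
  shows "(\<integral>y. \<phi> y \<partial>output_law) = ((\<integral>y. \<phi> y \<partial>P) + (\<integral>y. \<phi> (- y) \<partial>P)) / 2"
  using integral_J[of "\<lambda>z. \<phi> (snd z)" B] assms by (simp add: output_law_def integral_distr)

lemma integral_output_law_uminus:
  fixes \<phi> :: "ereal \<Rightarrow> real"
  assumes [measurable]: "\<phi> \<in> borel_measurable borel" and "\<And>y. \<bar>\<phi> y\<bar> \<le> B"
  shows "(\<integral>y. \<phi> (- y) \<partial>output_law) = (\<integral>y. \<phi> y \<partial>output_law)"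
  using integral_output_law[of \<phi> B] integral_output_law[of "\<lambda>y. \<phi> (- y)" B] assms by simp

lemma distr_output_law_uminus: "distr output_law borel uminus = output_law"
proof (rule measure_eqI)
  interpret S: prob_space output_law by (rule prob_space_output_law)
  fix A assume "A \<in> sets (distr output_law borel uminus)"
  then have A[measurable]: "A \<in> sets (borel :: ereal measure)" by simp
  have "emeasure (distr output_law borel uminus) A = emeasure output_law {y. - y \<in> A}"
    by (simp add: emeasure_distr vimage_def sets_eq_imp_space_eq[OF sets_output_law])
  also have "\<dots> = ennreal (\<integral>y. indicator A (- y) \<partial>output_law)"
    by (simp add: S.emeasure_eq_measure indicator_uminus[abs_def] sets_eq_imp_space_eq[OF sets_output_law])
  also have "(\<integral>y. indicator A (- y) \<partial>output_law) = (\<integral>y. indicator A y \<partial>output_law :: real)"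
    by (rule integral_output_law_uminus[where B=1]) simp_all
  also have "ennreal \<dots> = emeasure output_law A"
    by (simp add: S.emeasure_eq_measure)
  finally show "emeasure (distr output_law borel uminus) A = emeasure output_law A" .
qed (simp add: sets_output_law)

text \<open>\<open>soft_value\<close> is clipped to \<open>[-1, 1]\<close> so that the bound holds everywhere, not only almost
  surely; the dummy input \<open>0\<close> is harmless by \<open>soft_value_J_snd\<close>.\<close>

definition soft_value_J :: "real \<times> ereal \<Rightarrow> real" where
  "soft_value_J = real_cond_exp J (sigma_rv J snd borel) fst"

definition soft_value :: "ereal \<Rightarrow> real" where
  "soft_value y = max (-1) (min 1 (soft_value_J (0, y)))"

lemma finite_measure_subalgebra_output: "finite_measure_subalgebra J (sigma_rv J snd borel)"
  using subalgebra_sigma_rv[of snd J borel] prob_space.finite_measure[OF prob_space_J]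
  by (intro finite_measure_subalgebra.intro finite_measure_subalgebra_axioms.intro) simp_all

lemma soft_value_J_measurable[measurable]:
  "soft_value_J \<in> borel_measurable (sigma_rv J snd borel)" "soft_value_J \<in> borel_measurable J"
  by (simp_all add: soft_value_J_def)

lemma soft_value_J_snd: "soft_value_J (a, y) = soft_value_J (b, y)"
  by (rule borel_measurable_sigma_rv_factor[OF soft_value_J_measurable(1)])
     (simp_all add: sets_eq_imp_space_eq[OF sets_J] space_pair_measure)

lemma AE_J_input: "AE z in J. fst z \<in> {-1, 1}"
proof -
  have "{z \<in> space (borel \<Otimes>\<^sub>M borel). fst z \<in> {-1, 1::real}} \<in> sets (borel \<Otimes>\<^sub>M borel :: (real \<times> ereal) measure)"
    by measurable
  then show ?thesis
    unfolding bms_uniform_joint_eq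
    by (subst AE_distr_iff) (auto intro!: AE_I2 simp: space_pair_measure space_uniform_count_measure)
qed

lemma integrable_J_input: "integrable J fst"
  using AE_J_input by (intro J.integrable_const_bound[where B=1]) auto

lemma AE_soft_value_J: "AE z in J. soft_value_J z = soft_value (snd z)"
proof -
  interpret F: finite_measure_subalgebra J "sigma_rv J snd borel" by (rule finite_measure_subalgebra_output)
  have "AE z in J. fst z \<le> 1" "AE z in J. -1 \<le> fst z"
    using AE_J_input by (eventually_elim, auto)+
  then have "AE z in J. soft_value_J z \<le> 1" "AE z in J. -1 \<le> soft_value_J z"
    unfolding soft_value_J_def
    by (intro F.real_cond_exp_le_c F.real_cond_exp_ge_c integrable_J_input; simp)+
  then show ?thesis
  proof eventually_elim
    fix z assume "soft_value_J z \<le> 1" "-1 \<le> soft_value_J z"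
    moreover have "soft_value_J z = soft_value_J (0, snd z)"
      using soft_value_J_snd[of "fst z" "snd z" 0] by simp
    ultimately show "soft_value_J z = soft_value (snd z)" by (simp add: soft_value_def)
  qed
qed

lemma soft_value_measurable[measurable]: "soft_value \<in> borel_measurable borel"
proof -
  have "(\<lambda>y::ereal. (0::real, y)) \<in> measurable borel J" by simp
  then show ?thesis unfolding soft_value_def[abs_def] by measurable
qed

lemma soft_value_bounded: "\<bar>soft_value y\<bar> \<le> 1"
  by (simp add: soft_value_def)

lemma integral_output_law_indicator_soft_value:
  assumes A[measurable]: "A \<in> sets (borel :: ereal measure)"
  shows "(\<integral>y. indicator A y * soft_value y \<partial>output_law) = (measure P A - measure P {y. - y \<in> A}) / 2"
proof -
  interpret F: finite_measure_subalgebra J "sigma_rv J snd borel" by (rule finite_measure_subalgebra_output)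
  have "(\<lambda>z. indicator A (snd z) :: real) \<in> borel_measurable (sigma_rv J snd borel)"
    using measurable_vimage_algebra1[of snd "space J" borel] by (simp add: sigma_rv_def)
  moreover have "integrable J (\<lambda>z. indicator A (snd z) * fst z)"
    using AE_J_input by (intro J.integrable_const_bound[where B=1]) (auto simp: indicator_def)
  ultimately have "(\<integral>z. indicator A (snd z) * soft_value_J z \<partial>J) = (\<integral>z. indicator A (snd z) * fst z \<partial>J)"
    unfolding soft_value_J_def by (intro F.real_cond_exp_intg(2)) simp_all
  moreover have "(\<integral>y. indicator A y * soft_value y \<partial>output_law) = (\<integral>z. indicator A (snd z) * soft_value_J z \<partial>J)"
    using AE_soft_value_J by (auto simp: output_law_def integral_distr intro!: integral_cong_AE)
  moreover have "(\<integral>z. indicator A (snd z) * fst z \<partial>J) = (measure P A - measure P {y. - y \<in> A}) / 2"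
  proof -
    have "\<bar>indicator A y * x\<bar> \<le> (1::real)" if "x \<in> {-1, 1}" for x y
      using that by (auto simp: indicator_def)
    then show ?thesis
      using integral_J[of "\<lambda>z. indicator A (snd z) * fst z" 1]
      by (simp add: integral_P_indicator_uminus sets_eq_imp_space_eq[OF sets_P])
  qed
  ultimately show ?thesis by simp
qed

lemma set_integral_output_density:
  assumes x: "x \<in> {-1, 1}" and A[measurable]: "A \<in> sets (borel :: ereal measure)"
  shows "(\<integral>y. indicator A y * (1 + x * soft_value y) \<partial>output_law) = measure P {y. ereal x * y \<in> A}"
proof -
  interpret S: prob_space output_law by (rule prob_space_output_law)
  have "integrable output_law (\<lambda>y. indicator A y * soft_value y :: real)"
    using soft_value_bounded by (intro S.integrable_bounded[where B=1]) (auto simp: indicator_def)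
  moreover have "integrable output_law (indicator A :: ereal \<Rightarrow> real)"
    by (simp add: S.emeasure_eq_measure)
  ultimately have "(\<integral>y. indicator A y * (1 + x * soft_value y) \<partial>output_law)
      = measure output_law A + x * (\<integral>y. indicator A y * soft_value y \<partial>output_law)"
    by (simp add: distrib_left sets_eq_imp_space_eq[OF sets_output_law] mult.left_commute)
  also have "measure output_law A = (measure P A + measure P {y. - y \<in> A}) / 2"
    using integral_output_law[of "indicator A" 1]
    by (simp add: integral_P_indicator_uminus sets_eq_imp_space_eq[OF sets_output_law] sets_eq_imp_space_eq[OF sets_P])
  finally show ?thesis
    using x by (auto simp: integral_output_law_indicator_soft_value ereal_minus_one_times field_simps)
qed

lemma bms_out_eq_density:
  assumes x: "x \<in> {-1, 1}"
  shows "bms_out P x = density output_law (\<lambda>y. ennreal (1 + x * soft_value y))"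
proof (rule measure_eqI)
  interpret S: prob_space output_law by (rule prob_space_output_law)
  fix A assume "A \<in> sets (bms_out P x)"
  then have A[measurable]: "A \<in> sets (borel :: ereal measure)" by (simp add: bms_out_def)
  have density: "0 \<le> 1 + x * soft_value y" "1 + x * soft_value y \<le> 2" for y
    using x soft_value_bounded[of y] by (auto simp: abs_le_iff)
  have "emeasure (bms_out P x) A = ennreal (measure P {y. ereal x * y \<in> A})"
    by (simp add: bms_out_def emeasure_distr vimage_def sets_eq_imp_space_eq[OF sets_P] P.emeasure_eq_measure)
  also have "\<dots> = ennreal (\<integral>y. indicator A y * (1 + x * soft_value y) \<partial>output_law)"
    by (simp add: set_integral_output_density[OF x A])
  also have "\<dots> = (\<integral>\<^sup>+y. ennreal (1 + x * soft_value y) * indicator A y \<partial>output_law)"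
    using density
    by (subst nn_integral_eq_integral[symmetric])
       (auto intro!: S.integrable_bounded[where B=2] nn_integral_cong simp: indicator_def)
  also have "\<dots> = emeasure (density output_law (\<lambda>y. ennreal (1 + x * soft_value y))) A"
    by (simp add: emeasure_density)
  finally show "emeasure (bms_out P x) A = emeasure (density output_law (\<lambda>y. ennreal (1 + x * soft_value y))) A" .
qed (simp add: bms_out_def sets_output_law)

text \<open>Both \<open>1 + \<tau>(y)\<close> and \<open>1 - \<tau>(-y)\<close> are densities of \<open>P\<close> with respect to the output law.\<close>

lemma AE_soft_value_uminus: "AE y in output_law. soft_value (- y) = - soft_value y"
proof -
  interpret S: prob_space output_law by (rule prob_space_output_law)
  have bounded: "\<bar>1 + c * soft_value y\<bar> \<le> 2" if "c \<in> {-1, 1}" for c y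
    using that soft_value_bounded[of y] by (auto simp: abs_le_iff)
  have "AE y in output_law. 1 + soft_value y = 1 - soft_value (- y)"
  proof (rule density_unique_real)
    show "integrable output_law (\<lambda>y. 1 + soft_value y)" "integrable output_law (\<lambda>y. 1 - soft_value (- y))"
      using bounded[of 1] bounded[of "-1"] by (intro S.integrable_bounded[where B=2]; simp)+
    fix A assume "A \<in> sets output_law"
    then have A[measurable]: "A \<in> sets (borel :: ereal measure)" by (simp add: sets_output_law)
    have "(\<integral>y\<in>A. 1 - soft_value (- y) \<partial>output_law)
        = (\<integral>y. indicator {y. - y \<in> A} (- y) * (1 + (-1) * soft_value (- y)) \<partial>output_law)"
      by (simp add: set_lebesgue_integral_def indicator_def)
    also have "\<dots> = (\<integral>y. indicator {y. - y \<in> A} y * (1 + (-1) * soft_value y) \<partial>output_law)"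
      using bounded[of "-1"]
      by (intro integral_output_law_uminus[where B=2]) (auto simp: indicator_def abs_mult)
    also have "\<dots> = measure P A"
      using set_integral_output_density[of "-1" "{y. - y \<in> A}"] by (simp add: ereal_minus_one_times)
    also have "\<dots> = (\<integral>y\<in>A. 1 + soft_value y \<partial>output_law)"
      using set_integral_output_density[of 1 A] by (simp add: set_lebesgue_integral_def)
    finally show "(\<integral>y\<in>A. 1 + soft_value y \<partial>output_law) = (\<integral>y\<in>A. 1 - soft_value (- y) \<partial>output_law)" ..
  qed
  then show ?thesis by eventually_elim simp
qed

lemma distr_soft_value_symmetric:
  "distr output_law borel soft_value = distr output_law borel (\<lambda>y. - soft_value y)"
proof -
  have "distr output_law borel (\<lambda>y. - soft_value y) = distr output_law borel (\<lambda>y. soft_value (- y))"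
    using AE_soft_value_uminus by (intro distr_cong_AE) auto
  also have "\<dots> = distr (distr output_law borel uminus) borel soft_value"
    by (simp add: distr_distr comp_def)
  finally show ?thesis by (simp add: distr_output_law_uminus)
qed

lemma bms_moment_eq: "bms_moment P k = (\<integral>y. soft_value y ^ (2 * k) \<partial>output_law)"
proof -
  have "bms_moment P k = (\<integral>z. soft_value_J z ^ (2 * k) \<partial>J)"
    by (simp add: bms_moment_def soft_value_J_def Let_def)
  also have "\<dots> = (\<integral>z. soft_value (snd z) ^ (2 * k) \<partial>J)"
    using AE_soft_value_J by (intro integral_cong_AE) auto
  finally show ?thesis by (simp add: output_law_def integral_distr)
qed

end

locale bms_observation = prob_space M + bms_channel P
  for M :: "'a measure" and P :: "ereal measure" +
  fixes X :: "'a \<Rightarrow> real" and Y :: "'a \<Rightarrow> ereal"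
  assumes X_measurable[measurable]: "X \<in> borel_measurable M"
    and Y_measurable[measurable]: "Y \<in> borel_measurable M"
    and X_values: "\<And>\<omega>. \<omega> \<in> space M \<Longrightarrow> X \<omega> \<in> {-1, 1}"
begin

lemma abs_X_le_1: "\<omega> \<in> space M \<Longrightarrow> \<bar>X \<omega>\<bar> \<le> 1"
  using X_values[of \<omega>] by auto

lemma integrable_X: "integrable M X"
  using abs_X_le_1 by (intro integrable_bounded[where B=1]) auto

lemma expectation_X: "expectation X = 2 * prob {\<omega>\<in>space M. X \<omega> = 1} - 1"
proof -
  have "expectation X = expectation (\<lambda>\<omega>. 2 * indicator {\<omega>\<in>space M. X \<omega> = 1} \<omega> - 1)"
    using X_values by (intro Bochner_Integration.integral_cong) (auto simp: indicator_def)
  then show ?thesis by (simp add: prob_space emeasure_eq_measure)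
qed

lemma AE_clip_real_cond_exp_X:
  assumes "subalgebra M G"
  shows "AE \<omega> in M. max (-1) (min 1 (real_cond_exp M G X \<omega>)) = real_cond_exp M G X \<omega>"
proof -
  interpret G: finite_measure_subalgebra M G using assms by unfold_locales
  have "AE \<omega> in M. X \<omega> \<le> 1" "AE \<omega> in M. -1 \<le> X \<omega>"
    using abs_X_le_1 by (auto intro!: AE_I2 simp: abs_le_iff)
  then have "AE \<omega> in M. real_cond_exp M G X \<omega> \<le> 1" "AE \<omega> in M. -1 \<le> real_cond_exp M G X \<omega>"
    by (intro G.real_cond_exp_le_c G.real_cond_exp_ge_c integrable_X; simp)+
  then show ?thesis by eventually_elim simp
qed

lemma integral_mult_X_eq_clip:
  assumes G: "subalgebra M G" and h[measurable]: "h \<in> borel_measurable G"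
    and hb: "\<And>\<omega>. \<omega> \<in> space M \<Longrightarrow> \<bar>h \<omega>\<bar> \<le> B"
  shows "(\<integral>\<omega>. h \<omega> * X \<omega> \<partial>M) = (\<integral>\<omega>. h \<omega> * max (-1) (min 1 (real_cond_exp M G X \<omega>)) \<partial>M)"
proof -
  interpret G: finite_measure_subalgebra M G using G by unfold_locales
  have [measurable]: "h \<in> borel_measurable M" by (rule measurable_from_subalg[OF G h])
  have "integrable M (\<lambda>\<omega>. h \<omega> * X \<omega>)"
    using hb abs_X_le_1 by (intro integrable_bounded[where B=B]) (auto intro: abs_mult_le_bound)
  then have "(\<integral>\<omega>. h \<omega> * X \<omega> \<partial>M) = (\<integral>\<omega>. h \<omega> * real_cond_exp M G X \<omega> \<partial>M)"
    by (intro G.real_cond_exp_intg(2)[symmetric]) simp_all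
  also have "\<dots> = (\<integral>\<omega>. h \<omega> * max (-1) (min 1 (real_cond_exp M G X \<omega>)) \<partial>M)"
    using AE_clip_real_cond_exp_X[OF G] by (intro integral_cong_AE) auto
  finally show ?thesis .
qed

lemma binary_observation_side_information:
  fixes N :: "'u measure" and U :: "'a \<Rightarrow> 'u"
  assumes U[measurable]: "U \<in> measurable M N"
    and markov: "\<And>x A B. x \<in> {-1, 1} \<Longrightarrow> A \<in> sets (borel :: ereal measure) \<Longrightarrow> B \<in> sets N \<Longrightarrow>
       measure M {\<omega>\<in>space M. X \<omega> = x \<and> U \<omega> \<in> B \<and> Y \<omega> \<in> A}
         = measure M {\<omega>\<in>space M. X \<omega> = x \<and> U \<omega> \<in> B} * measure (bms_out P x) A"
  shows "binary_observation M output_law X Y (sigma_rv M U N) (sigma_rv M (\<lambda>\<omega>. (Y \<omega>, U \<omega>)) (borel \<Otimes>\<^sub>M N))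
    (\<lambda>\<omega>. max (-1) (min 1 (real_cond_exp M (sigma_rv M U N) X \<omega>))) soft_value"
proof -
  let ?G = "sigma_rv M U N"
  show ?thesis
  proof (intro binary_observation.intro binary_observation_axioms.intro)
    show "prob_space M" "prob_space output_law" by (fact prob_space_axioms prob_space_output_law)+
    show "subalgebra M ?G" "subalgebra M (sigma_rv M (\<lambda>\<omega>. (Y \<omega>, U \<omega>)) (borel \<Otimes>\<^sub>M N))"
      by (simp_all add: subalgebra_sigma_rv)
    show "sets (sigma_rv M (\<lambda>\<omega>. (Y \<omega>, U \<omega>)) (borel \<Otimes>\<^sub>M N))
        = sigma_sets (space M) {Y -` A \<inter> B | A B. A \<in> sets borel \<and> B \<in> sets ?G}"
      by (rule sets_sigma_rv_pair) simp_all
    show "measure M {\<omega>\<in>space M. X \<omega> = x \<and> \<omega> \<in> B \<and> Y \<omega> \<in> A}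
        = measure M {\<omega>\<in>space M. X \<omega> = x \<and> \<omega> \<in> B} * measure (density output_law (\<lambda>y. ennreal (1 + x * soft_value y))) A"
      if x: "x \<in> {-1, 1}" and A: "A \<in> sets borel" and B: "B \<in> sets ?G" for x A B
    proof -
      obtain b where b: "b \<in> sets N" "B = U -` b \<inter> space M" using B by (auto simp: sets_sigma_rv[OF U])
      then have "{\<omega>\<in>space M. X \<omega> = x \<and> \<omega> \<in> B \<and> Y \<omega> \<in> A} = {\<omega>\<in>space M. X \<omega> = x \<and> U \<omega> \<in> b \<and> Y \<omega> \<in> A}"
        "{\<omega>\<in>space M. X \<omega> = x \<and> \<omega> \<in> B} = {\<omega>\<in>space M. X \<omega> = x \<and> U \<omega> \<in> b}"
        by auto
      then show ?thesis using markov[OF x A b(1)] by (simp add: bms_out_eq_density[OF x])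
    qed
    show "(\<integral>\<omega>. h \<omega> * X \<omega> \<partial>M) = (\<integral>\<omega>. h \<omega> * max (-1) (min 1 (real_cond_exp M ?G X \<omega>)) \<partial>M)"
      if "h \<in> borel_measurable ?G" "\<And>\<omega>. \<omega> \<in> space M \<Longrightarrow> \<bar>h \<omega>\<bar> \<le> B" for h B
      by (rule integral_mult_X_eq_clip[OF subalgebra_sigma_rv[OF U] that])
  qed (use X_values in \<open>auto simp: sets_output_law soft_value_bounded distr_soft_value_symmetric\<close>)
qed

theorem sums_cond_entropy_bits_side_information:
  fixes N :: "'u measure" and U :: "'a \<Rightarrow> 'u"
  assumes U: "U \<in> measurable M N"
    and markov: "\<And>x A B. x \<in> {-1, 1} \<Longrightarrow> A \<in> sets (borel :: ereal measure) \<Longrightarrow> B \<in> sets N \<Longrightarrow>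
       measure M {\<omega>\<in>space M. X \<omega> = x \<and> U \<omega> \<in> B \<and> Y \<omega> \<in> A}
         = measure M {\<omega>\<in>space M. X \<omega> = x \<and> U \<omega> \<in> B} * measure (bms_out P x) A"
  shows "(\<lambda>k. ck (Suc k) * (1 - bms_moment P (Suc k))
      * (1 - (\<integral>\<omega>. \<bar>real_cond_exp M (sigma_rv M U N) X \<omega>\<bar> ^ (2 * Suc k) \<partial>M)))
    sums cond_entropy_bits M {-1, 1} X (sigma_rv M (\<lambda>\<omega>. (Y \<omega>, U \<omega>)) (borel \<Otimes>\<^sub>M N))"
proof -
  interpret binary_observation M output_law X Y "sigma_rv M U N" "sigma_rv M (\<lambda>\<omega>. (Y \<omega>, U \<omega>)) (borel \<Otimes>\<^sub>M N)"
    "\<lambda>\<omega>. max (-1) (min 1 (real_cond_exp M (sigma_rv M U N) X \<omega>))" soft_value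
    by (rule binary_observation_side_information[OF U markov])
  have "(\<integral>\<omega>. max (-1) (min 1 (real_cond_exp M (sigma_rv M U N) X \<omega>)) ^ (2 * Suc k) \<partial>M)
      = (\<integral>\<omega>. \<bar>real_cond_exp M (sigma_rv M U N) X \<omega>\<bar> ^ (2 * Suc k) \<partial>M)" for k
    using AE_clip_real_cond_exp_X[OF subalgebra_sigma_rv[OF U]]
    by (intro integral_cong_AE) (auto simp: power_even_abs simp del: power_Suc)
  then show ?thesis
    using sums_cond_entropy_bits by (simp add: bms_moment_eq del: power_Suc)
qed

corollary sums_cond_entropy_bits_without_side_information:
  assumes mean: "prob {\<omega>\<in>space M. X \<omega> = 1} = (1 + \<mu>) / 2"
    and markov: "\<And>x A. x \<in> {-1, 1} \<Longrightarrow> A \<in> sets (borel :: ereal measure) \<Longrightarrow>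
       measure M {\<omega>\<in>space M. X \<omega> = x \<and> Y \<omega> \<in> A} = measure M {\<omega>\<in>space M. X \<omega> = x} * measure (bms_out P x) A"
  shows "(\<lambda>k. ck (Suc k) * (1 - bms_moment P (Suc k)) * (1 - \<mu> ^ (2 * Suc k)))
    sums cond_entropy_bits M {-1, 1} X (sigma_rv M Y borel)"
proof -
  let ?U = "\<lambda>_. ()" and ?N = "count_space (UNIV :: unit set)"
  have "measure M {\<omega>\<in>space M. X \<omega> = x \<and> ?U \<omega> \<in> B \<and> Y \<omega> \<in> A}
      = measure M {\<omega>\<in>space M. X \<omega> = x \<and> ?U \<omega> \<in> B} * measure (bms_out P x) A"
    if "x \<in> {-1, 1}" "A \<in> sets borel" for x A B
    using markov[OF that] by (cases "() \<in> B") simp_all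
  moreover have "?U \<in> measurable M ?N" by simp
  ultimately have trivial: "(\<lambda>k. ck (Suc k) * (1 - bms_moment P (Suc k))
      * (1 - (\<integral>\<omega>. \<bar>real_cond_exp M (sigma_rv M ?U ?N) X \<omega>\<bar> ^ (2 * Suc k) \<partial>M)))
    sums cond_entropy_bits M {-1, 1} X (sigma_rv M (\<lambda>\<omega>. (Y \<omega>, ?U \<omega>)) (borel \<Otimes>\<^sub>M ?N))"
    by (intro sums_cond_entropy_bits_side_information)
  have "expectation X = \<mu>" using expectation_X mean by (simp add: field_simps)
  then have AE_mean: "AE \<omega> in M. real_cond_exp M (sigma_rv M ?U ?N) X \<omega> = \<mu>"
    using real_cond_exp_sigma_rv_const[OF integrable_X, of "()" ?N] by simp
  have moments: "(\<integral>\<omega>. \<bar>real_cond_exp M (sigma_rv M ?U ?N) X \<omega>\<bar> ^ (2 * Suc k) \<partial>M) = \<mu> ^ (2 * Suc k)" for k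
  proof -
    have "(\<integral>\<omega>. \<bar>real_cond_exp M (sigma_rv M ?U ?N) X \<omega>\<bar> ^ (2 * Suc k) \<partial>M) = (\<integral>\<omega>. \<bar>\<mu>\<bar> ^ (2 * Suc k) \<partial>M)"
      using AE_mean by (intro integral_cong_AE) (auto elim!: AE_mp)
    also have "\<dots> = \<mu> ^ (2 * Suc k)"
      using power_even_abs[of "2 * Suc k" \<mu>] by (simp add: prob_space del: power_Suc)
    finally show ?thesis .
  qed
  have sigma: "sigma_rv M (\<lambda>\<omega>. (Y \<omega>, ?U \<omega>)) (borel \<Otimes>\<^sub>M ?N) = sigma_rv M Y borel"
    by (rule sigma_rv_pair_const) simp_all
  show ?thesis using trivial unfolding sigma moments .
qed

end

theorem lemma17:
  fixes M :: "'a measure" and N :: "'u measure" and P :: "ereal measure"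
    and X :: "'a \<Rightarrow> real" and Y :: "'a \<Rightarrow> ereal" and U :: "'a \<Rightarrow> 'u"
    and \<mu> :: real
  assumes M: "prob_space M"
    and P: "bms P"
    and X_meas: "X \<in> borel_measurable M"
    and Y_meas: "Y \<in> borel_measurable M"
    and U_meas: "U \<in> measurable M N"
    and X_vals: "\<And>\<omega>. \<omega> \<in> space M \<Longrightarrow> X \<omega> \<in> {-1, 1}"
    and X_mean: "measure M {\<omega>\<in>space M. X \<omega> = 1} = (1 + \<mu>) / 2"
    and chan_markov: "\<And>x A B. x \<in> {-1, 1} \<Longrightarrow> A \<in> sets (borel :: ereal measure) \<Longrightarrow> B \<in> sets N \<Longrightarrow>
         measure M {\<omega>\<in>space M. X \<omega> = x \<and> U \<omega> \<in> B \<and> Y \<omega> \<in> A}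
           = measure M {\<omega>\<in>space M. X \<omega> = x \<and> U \<omega> \<in> B} * measure (bms_out P x) A"
  shows "(\<lambda>k. ck (Suc k) * (1 - bms_moment P (Suc k)) * (1 - \<mu> ^ (2 * Suc k)))
           sums cond_entropy_bits M {-1, 1} X (sigma_rv M Y borel)
       \<and> (\<lambda>k. ck (Suc k) * (1 - bms_moment P (Suc k))
              * (1 - (\<integral>\<omega>. \<bar>real_cond_exp M (sigma_rv M U N) X \<omega>\<bar> ^ (2 * Suc k) \<partial>M)))
           sums cond_entropy_bits M {-1, 1} X (sigma_rv M (\<lambda>\<omega>. (Y \<omega>, U \<omega>)) (borel \<Otimes>\<^sub>M N))"
proof -
  interpret bms_observation M P X Y
    using M P X_meas Y_meas X_vals by (intro bms_observation.intro bms_channel.intro bms_observation_axioms.intro)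
  have "{\<omega>\<in>space M. X \<omega> = x \<and> U \<omega> \<in> space N \<and> Y \<omega> \<in> A} = {\<omega>\<in>space M. X \<omega> = x \<and> Y \<omega> \<in> A}"
    "{\<omega>\<in>space M. X \<omega> = x \<and> U \<omega> \<in> space N} = {\<omega>\<in>space M. X \<omega> = x}" for x A
    using measurable_space[OF U_meas] by auto
  then have "measure M {\<omega>\<in>space M. X \<omega> = x \<and> Y \<omega> \<in> A}
      = measure M {\<omega>\<in>space M. X \<omega> = x} * measure (bms_out P x) A"
    if "x \<in> {-1, 1}" "A \<in> sets borel" for x A
    using chan_markov[OF that sets.top] by simp
  then show ?thesis
    using sums_cond_entropy_bits_without_side_information[OF X_mean]
      sums_cond_entropy_bits_side_information[OF U_meas chan_markov] by blast
qed

end
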